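(* Let $f\in L^2(\mathbb T)$ be such that $\Omega_1(f;\delta)=O(\delta^{1/2+\eta})$ as $\delta\to0^+$ for some $\eta>0$. Then for Lebesgue almost every $\xi$, $$\lim_{N\to\infty}\frac1N\sum_{n=1}^N f(2^n\xi-\xi)=\int_{\mathbb T}f(x)\,dx.$$
   Context: $\mathbb T=\mathbb R/\mathbb Z$ with Lebesgue measure; functions on $\mathbb T$ are identified with $1$-periodic functions on $\mathbb R$. For $f\in L^1(\mathbb T)$, the $L^1$-modulus of continuity is $\Omega_1(f;\delta)=\int_{\mathbb T}|f(x+\delta)-f(x)|\,dx$. *)

theory Defs
  imports "HOL-Analysis.Analysis" "HOL-Library.Landau_Symbols"
begin

text \<open>Functions on the torus R/Z are identified with 1-periodic functions on R.\<close>
definition periodic1 :: "(real \<Rightarrow> 'a) \<Rightarrow> bool" where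
  "periodic1 f \<longleftrightarrow> (\<forall>x. f (x + 1) = f x)"

definition in_L2_torus :: "(real \<Rightarrow> complex) \<Rightarrow> bool" where
  "in_L2_torus f \<longleftrightarrow> periodic1 f \<and> f \<in> borel_measurable lebesgue \<and>
     set_integrable lebesgue {0..1} (\<lambda>x. (cmod (f x))\<^sup>2)"

definition L1_modulus :: "(real \<Rightarrow> complex) \<Rightarrow> real \<Rightarrow> real" where
  "L1_modulus f \<delta> = (LINT x:{0..1}|lebesgue. cmod (f (x + \<delta>) - f x))"

end

theory Submission
  imports Defs "HOL-Probability.Probability_Measure"
begin

text \<open>Let h be the real or imaginary part of f, \<open>\<alpha> = 1/2 + \<eta>\<close>, and \<open>a\<^sub>n = 2^n - 1\<close>.
  Replacing h by its mean avg \<open>\<epsilon>\<close> over windows of length \<open>\<epsilon>\<close> costs \<open>O(\<epsilon>^(\<alpha> - 1/2))\<close> in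
  \<open>L\<^sup>2\<close>: telescope over the dyadic scales \<open>\<epsilon>/2^j\<close>, each of which is controlled by the
  \<open>L\<^sup>1\<close> modulus times the sup bound \<open>O(\<epsilon>^(-1/2))\<close>. The mean moves only by \<open>O(\<surd>\<delta>/\<epsilon>)\<close> under
  shifts of size \<open>\<delta> = a/b\<close>, and averaging \<open>\<xi>\<close> over the shifts by \<open>t/b\<close> shows that for
  mean-zero h the correlation \<open>\<integral> h(a\<xi>) h(b\<xi>) d\<xi>\<close> is \<open>O((a/b)^\<kappa>)\<close>. Along a lacunary sequence
  these correlations decay geometrically in n - m, so the partial sums have \<open>L\<^sup>2\<close> norm
  \<open>O(\<surd>N)\<close>, and a Borel-Cantelli argument gives almost everywhere convergence of the averages
  along \<open>N = \<lfloor>\<rho>^j\<rfloor>\<close>. For nonnegative h the averages at intermediate N are squeezed between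
  neighbouring terms of these subsequences, so letting \<open>\<rho>\<close> decrease to 1 through the rationals
  and splitting h into positive and negative parts gives the full limit.\<close>

section \<open>The torus measure\<close>

text \<open>The Haar probability measure of \<open>\<real>/\<int>\<close>, realised on the real line as Lebesgue
  measure on the fundamental domain [0,1). Its measurable sets are all Borel sets, so 1-periodic
  functions on \<open>\<real>\<close> serve as functions on the torus.\<close>

definition torus :: "real measure" where
  "torus = density lborel (\<lambda>x. ennreal (indicator {0..<1} x))"

lemma sets_torus [simp, measurable_cong]: "sets torus = sets borel"
  by (simp add: torus_def)

lemma space_torus [simp]: "space torus = UNIV"
  by (simp add: torus_def)

lemma emeasure_torus_UNIV: "emeasure torus UNIV = 1"
  by (simp add: torus_def emeasure_density ennreal_indicator)

interpretation torus: prob_space torus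
  by (rule prob_spaceI) (simp add: emeasure_torus_UNIV)

lemma measure_torus_UNIV [simp]: "measure torus UNIV = 1"
  by (simp add: measure_def emeasure_torus_UNIV)

lemma nn_integral_torus:
  "u \<in> borel_measurable borel \<Longrightarrow>
    (\<integral>\<^sup>+x. u x \<partial>torus) = (\<integral>\<^sup>+x. indicator {0..<1} x * u x \<partial>lborel)"
  unfolding torus_def by (subst nn_integral_density) (auto simp: ennreal_indicator)

lemma integral_torus:
  fixes u :: "real \<Rightarrow> 'a::{banach, second_countable_topology}"
  shows "u \<in> borel_measurable borel \<Longrightarrow>
    (\<integral>x. u x \<partial>torus) = (\<integral>x. indicator {0..<1} x *\<^sub>R u x \<partial>lborel)"
  unfolding torus_def by (subst integral_density) (auto simp: indicator_def)

lemma integrable_torus_iff: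
  fixes u :: "real \<Rightarrow> 'a::{banach, second_countable_topology}"
  shows "u \<in> borel_measurable borel \<Longrightarrow>
    integrable torus u \<longleftrightarrow> integrable lborel (\<lambda>x. indicator {0..<1} x *\<^sub>R u x)"
  unfolding torus_def by (subst integrable_density) (auto simp: indicator_def)

lemma AE_torus_iff: "(AE x in torus. Q x) \<longleftrightarrow> (AE x in lborel. 0 \<le> x \<and> x < 1 \<longrightarrow> Q x)"
  unfolding torus_def by (subst AE_density) (auto simp: indicator_def)

lemma AE_torus: "AE x in torus. 0 \<le> x \<and> x < 1"
  by (simp add: AE_torus_iff)

lemma periodic1_add_of_int:
  assumes "periodic1 u" shows "u (x + of_int k) = u x"
proof (induction k arbitrary: x rule: int_induct[where k = 0])
  case (step1 i)
  then show ?case using assms by (metis add.assoc of_int_add of_int_1 periodic1_def)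
next
  case (step2 i)
  then show ?case using assms by (metis diff_add_cancel add_diff_eq of_int_diff of_int_1 periodic1_def)
qed simp

lemma periodic1_dilate: "periodic1 u \<Longrightarrow> periodic1 (\<lambda>x. u (real k * x))"
  using periodic1_add_of_int[of u _ "int k"] by (simp add: periodic1_def distrib_left)

lemma periodic1_shift: "periodic1 u \<Longrightarrow> periodic1 (\<lambda>x. u (x + c))"
  unfolding periodic1_def by (metis add.commute add.left_commute)

lemma nn_integral_indicator_translate:
  fixes u :: "real \<Rightarrow> ennreal" assumes [measurable]: "u \<in> borel_measurable borel"
  shows "(\<integral>\<^sup>+x. indicator {a+t..<b+t} x * u x \<partial>lborel)
       = (\<integral>\<^sup>+x. indicator {a..<b} x * u (x + t) \<partial>lborel)"
  using nn_integral_real_affine[of "\<lambda>x. indicator {a+t..<b+t} x * u x" 1 t]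
  by (simp add: indicator_def add.commute)

lemma nn_integral_indicator_split:
  fixes u :: "real \<Rightarrow> ennreal" assumes [measurable]: "u \<in> borel_measurable borel"
    and "a \<le> b" "b \<le> c"
  shows "(\<integral>\<^sup>+x. indicator {a..<c} x * u x \<partial>lborel)
       = (\<integral>\<^sup>+x. indicator {a..<b} x * u x \<partial>lborel) + (\<integral>\<^sup>+x. indicator {b..<c} x * u x \<partial>lborel)"
proof -
  have "(\<integral>\<^sup>+x. indicator {a..<c} x * u x \<partial>lborel)
      = (\<integral>\<^sup>+x. indicator {a..<b} x * u x + indicator {b..<c} x * u x \<partial>lborel)"
    using assms(2,3) by (intro nn_integral_cong) (auto simp: indicator_def)
  then show ?thesis by (simp add: nn_integral_add)
qed

lemma nn_integral_periodic_period:
  fixes u :: "real \<Rightarrow> ennreal" assumes [measurable]: "u \<in> borel_measurable borel"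
    and per: "periodic1 u"
  shows "(\<integral>\<^sup>+x. indicator {c..<c+1} x * u x \<partial>lborel)
       = (\<integral>\<^sup>+x. indicator {0..<1} x * u x \<partial>lborel)"
proof -
  define n where "n = \<lfloor>c\<rfloor>"
  define r where "r = c - of_int n"
  have r: "0 \<le> r" "r < 1" unfolding r_def n_def by linarith+
  have c: "c = r + of_int n" by (simp add: r_def)
  have "(\<integral>\<^sup>+x. indicator {c..<c+1} x * u x \<partial>lborel)
     = (\<integral>\<^sup>+x. indicator {r + of_int n..<1 + of_int n} x * u x \<partial>lborel)
     + (\<integral>\<^sup>+x. indicator {0 + (of_int n + 1)..<r + (of_int n + 1)} x * u x \<partial>lborel)"
    unfolding c using r
    by (subst nn_integral_indicator_split[where b = "1 + of_int n"]) (auto simp: algebra_simps)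
  also have "\<dots> = (\<integral>\<^sup>+x. indicator {r..<1} x * u (x + of_int n) \<partial>lborel)
     + (\<integral>\<^sup>+x. indicator {0..<r} x * u (x + of_int (n + 1)) \<partial>lborel)"
    by (subst (1 2) nn_integral_indicator_translate) auto
  also have "\<dots> = (\<integral>\<^sup>+x. indicator {r..<1} x * u x \<partial>lborel)
     + (\<integral>\<^sup>+x. indicator {0..<r} x * u x \<partial>lborel)"
    by (simp only: periodic1_add_of_int[OF per])
  also have "\<dots> = (\<integral>\<^sup>+x. indicator {0..<1} x * u x \<partial>lborel)"
    using r by (subst nn_integral_indicator_split[where b = r]) (auto simp: add.commute)
  finally show ?thesis .
qed

lemma nn_integral_periodic_periods:
  fixes u :: "real \<Rightarrow> ennreal" assumes [measurable]: "u \<in> borel_measurable borel"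
    and per: "periodic1 u"
  shows "(\<integral>\<^sup>+x. indicator {0..<real k} x * u x \<partial>lborel)
       = of_nat k * (\<integral>\<^sup>+x. indicator {0..<1} x * u x \<partial>lborel)"
proof (induction k)
  case (Suc k)
  have "(\<integral>\<^sup>+x. indicator {0..<real (Suc k)} x * u x \<partial>lborel)
     = (\<integral>\<^sup>+x. indicator {0..<real k} x * u x \<partial>lborel)
       + (\<integral>\<^sup>+x. indicator {real k..<real k + 1} x * u x \<partial>lborel)"
    using nn_integral_indicator_split[of u 0 "real k" "real k + 1"] by (simp add: add.commute)
  then show ?case
    by (simp add: Suc nn_integral_periodic_period[OF assms] distrib_right)
qed simp

lemma nn_integral_torus_shift:
  fixes u :: "real \<Rightarrow> ennreal" assumes [measurable]: "u \<in> borel_measurable borel"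
    and per: "periodic1 u"
  shows "(\<integral>\<^sup>+x. u (x + c) \<partial>torus) = (\<integral>\<^sup>+x. u x \<partial>torus)"
  using nn_integral_indicator_translate[of u 0 c 1] nn_integral_periodic_period[OF assms, of c]
  by (simp add: nn_integral_torus add.commute)

lemma nn_integral_torus_dilate:
  fixes u :: "real \<Rightarrow> ennreal" assumes [measurable]: "u \<in> borel_measurable borel"
    and per: "periodic1 u" and k: "0 < k"
  shows "(\<integral>\<^sup>+x. u (real k * x) \<partial>torus) = (\<integral>\<^sup>+x. u x \<partial>torus)"
proof -
  have "of_nat k * (\<integral>\<^sup>+x. indicator {0..<1} x * u x \<partial>lborel)
      = (\<integral>\<^sup>+x. indicator {0..<real k} x * u x \<partial>lborel)"
    by (rule nn_integral_periodic_periods[OF assms(1,2), symmetric])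
  also have "\<dots> = of_nat k * (\<integral>\<^sup>+x. indicator {0..<real k} (real k * x) * u (real k * x) \<partial>lborel)"
    using nn_integral_real_affine[of "\<lambda>x. indicator {0..<real k} x * u x" "real k" 0] k
    by (simp add: ennreal_of_nat_eq_real_of_nat)
  also have "(\<integral>\<^sup>+x. indicator {0..<real k} (real k * x) * u (real k * x) \<partial>lborel)
      = (\<integral>\<^sup>+x. indicator {0..<1} x * u (real k * x) \<partial>lborel)"
    using k by (intro nn_integral_cong) (auto simp: indicator_def zero_le_mult_iff)
  finally have "of_nat k * (\<integral>\<^sup>+x. indicator {0..<1} x * u x \<partial>lborel)
      = of_nat k * (\<integral>\<^sup>+x. indicator {0..<1} x * u (real k * x) \<partial>lborel)" .
  then show ?thesis
    using k by (simp add: nn_integral_torus ennreal_mult_cancel_left)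
qed

lemma nn_integral_torus_affine:
  fixes u :: "real \<Rightarrow> ennreal" assumes [measurable]: "u \<in> borel_measurable borel"
    and per: "periodic1 u" and k: "0 < k"
  shows "(\<integral>\<^sup>+x. u (real k * x + c) \<partial>torus) = (\<integral>\<^sup>+x. u x \<partial>torus)"
  using nn_integral_torus_dilate[OF _ periodic1_shift[OF per] k, of c] nn_integral_torus_shift[OF assms(1,2)]
  by simp

lemma integrable_torus_affine_iff:
  fixes u :: "real \<Rightarrow> real" assumes [measurable]: "u \<in> borel_measurable borel"
    and per: "periodic1 u" and k: "0 < k"
  shows "integrable torus (\<lambda>x. u (real k * x + c)) \<longleftrightarrow> integrable torus u"
  using nn_integral_torus_affine[of "\<lambda>x. ennreal (norm (u x))" k c] per k
  by (simp add: integrable_iff_bounded periodic1_def)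

lemma integral_torus_affine:
  fixes u :: "real \<Rightarrow> real" assumes [measurable]: "u \<in> borel_measurable borel"
    and per: "periodic1 u" and k: "0 < k"
  shows "(\<integral>x. u (real k * x + c) \<partial>torus) = (\<integral>x. u x \<partial>torus)"
proof (cases "integrable torus u")
  case True
  then have "integrable torus (\<lambda>x. u (real k * x + c))"
    using integrable_torus_affine_iff[OF assms] by simp
  moreover have "(\<integral>\<^sup>+x. ennreal (u (real k * x + c)) \<partial>torus) = (\<integral>\<^sup>+x. ennreal (u x) \<partial>torus)"
    "(\<integral>\<^sup>+x. ennreal (- u (real k * x + c)) \<partial>torus) = (\<integral>\<^sup>+x. ennreal (- u x) \<partial>torus)"
    using nn_integral_torus_affine[of "\<lambda>x. ennreal (u x)" k c]
      nn_integral_torus_affine[of "\<lambda>x. ennreal (- u x)" k c] per k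
    by (simp_all add: periodic1_def)
  ultimately show ?thesis
    using True by (simp add: real_lebesgue_integral_def)
next
  case False
  then show ?thesis
    using integrable_torus_affine_iff[OF assms] by (simp add: not_integrable_integral_eq)
qed

corollary integrable_torus_shift_iff:
  fixes u :: "real \<Rightarrow> real"
  shows "u \<in> borel_measurable borel \<Longrightarrow> periodic1 u \<Longrightarrow>
    integrable torus (\<lambda>x. u (x + c)) \<longleftrightarrow> integrable torus u"
  using integrable_torus_affine_iff[of u 1 c] by simp

corollary integral_torus_shift:
  fixes u :: "real \<Rightarrow> real"
  shows "u \<in> borel_measurable borel \<Longrightarrow> periodic1 u \<Longrightarrow>
    (\<integral>x. u (x + c) \<partial>torus) = (\<integral>x. u x \<partial>torus)"
  using integral_torus_affine[of u 1 c] by simp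

corollary integrable_torus_dilate_iff:
  fixes u :: "real \<Rightarrow> real"
  shows "u \<in> borel_measurable borel \<Longrightarrow> periodic1 u \<Longrightarrow> 0 < k \<Longrightarrow>
    integrable torus (\<lambda>x. u (real k * x)) \<longleftrightarrow> integrable torus u"
  using integrable_torus_affine_iff[of u k 0] by simp

corollary integral_torus_dilate:
  fixes u :: "real \<Rightarrow> real"
  shows "u \<in> borel_measurable borel \<Longrightarrow> periodic1 u \<Longrightarrow> 0 < k \<Longrightarrow>
    (\<integral>x. u (real k * x) \<partial>torus) = (\<integral>x. u x \<partial>torus)"
  using integral_torus_affine[of u k 0] by simp

lemma nn_integral_torus_rescale:
  fixes u :: "real \<Rightarrow> ennreal" assumes [measurable]: "u \<in> borel_measurable borel" and s: "0 < s"
  shows "ennreal s * (\<integral>\<^sup>+t. u (y + s * t) \<partial>torus) = (\<integral>\<^sup>+x. indicator {y..<y+s} x * u x \<partial>lborel)"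
proof -
  have "(\<integral>\<^sup>+x. indicator {y..<y+s} x * u x \<partial>lborel)
      = ennreal s * (\<integral>\<^sup>+t. indicator {y..<y+s} (y + s * t) * u (y + s * t) \<partial>lborel)"
    using s nn_integral_real_affine[of "\<lambda>x. indicator {y..<y+s} x * u x" s y] by simp
  also have "(\<integral>\<^sup>+t. indicator {y..<y+s} (y + s * t) * u (y + s * t) \<partial>lborel)
      = (\<integral>\<^sup>+t. indicator {0..<1} t * u (y + s * t) \<partial>lborel)"
    using s by (intro nn_integral_cong) (auto simp: indicator_def zero_le_mult_iff)
  finally show ?thesis by (simp add: nn_integral_torus)
qed

lemma integral_torus_rescale:
  fixes g :: "real \<Rightarrow> real" assumes [measurable]: "g \<in> borel_measurable borel" and s: "0 < s"
  shows "s * (\<integral>t. g (y + s * t) \<partial>torus) = (LINT x:{y..<y+s}|lborel. g x)"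
proof -
  have "(LINT x:{y..<y+s}|lborel. g x)
      = s * (\<integral>t. indicator {y..<y+s} (y + s * t) * g (y + s * t) \<partial>lborel)"
    using s lborel_integral_real_affine[of s "\<lambda>x. indicator {y..<y+s} x * g x" y]
    by (simp add: set_lebesgue_integral_def)
  also have "(\<integral>t. indicator {y..<y+s} (y + s * t) * g (y + s * t) \<partial>lborel)
      = (\<integral>t. indicator {0..<1} t * g (y + s * t) \<partial>lborel)"
    using s by (intro Bochner_Integration.integral_cong) (auto simp: indicator_def zero_le_mult_iff)
  finally show ?thesis by (simp add: integral_torus)
qed

lemma nn_integral_torus_rescale_le:
  fixes u :: "real \<Rightarrow> ennreal" assumes [measurable]: "u \<in> borel_measurable borel"
    and per: "periodic1 u" and s: "0 < s" "s \<le> 1"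
  shows "(\<integral>\<^sup>+t. u (y + s * t) \<partial>torus) \<le> ennreal (1/s) * (\<integral>\<^sup>+x. u x \<partial>torus)"
proof -
  have "ennreal s * (\<integral>\<^sup>+t. u (y + s * t) \<partial>torus) \<le> (\<integral>\<^sup>+x. indicator {y..<y+1} x * u x \<partial>lborel)"
    unfolding nn_integral_torus_rescale[OF assms(1) s(1)] using s
    by (intro nn_integral_mono) (auto simp: indicator_def)
  also have "\<dots> = (\<integral>\<^sup>+x. u x \<partial>torus)"
    by (simp add: nn_integral_periodic_period[OF assms(1,2)] nn_integral_torus)
  finally have "ennreal (1/s) * (ennreal s * (\<integral>\<^sup>+t. u (y + s * t) \<partial>torus))
      \<le> ennreal (1/s) * (\<integral>\<^sup>+x. u x \<partial>torus)"
    by (rule mult_left_mono) simp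
  then show ?thesis
    using s by (simp add: mult.assoc[symmetric] ennreal_mult[symmetric])
qed

lemma nn_integral_le_imp_integral_le:
  fixes g :: "'a \<Rightarrow> real"
  assumes [measurable]: "g \<in> borel_measurable M" and nonneg: "\<And>x. 0 \<le> g x"
    and bound: "(\<integral>\<^sup>+x. ennreal (g x) \<partial>M) \<le> ennreal c" and "0 \<le> c"
  shows "integrable M g" "(\<integral>x. g x \<partial>M) \<le> c"
proof -
  show "integrable M g"
    using le_less_trans[OF bound ennreal_less_top] nonneg by (auto simp: integrable_iff_bounded)
  then have "ennreal (\<integral>x. g x \<partial>M) \<le> ennreal c"
    using bound nonneg by (simp add: nn_integral_eq_integral)
  then show "(\<integral>x. g x \<partial>M) \<le> c"
    using \<open>0 \<le> c\<close> by (simp add: ennreal_le_iff)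
qed

lemma AE_tendsto_zero_if_summable_nn_integral:
  fixes F :: "nat \<Rightarrow> 'a \<Rightarrow> real"
  assumes [measurable]: "\<And>j. F j \<in> borel_measurable M" and nonneg: "\<And>j x. 0 \<le> F j x"
    and bound: "\<And>j. (\<integral>\<^sup>+x. ennreal (F j x) \<partial>M) \<le> ennreal (c j)"
    and "summable c" and "\<And>j. 0 \<le> c j"
  shows "AE x in M. (\<lambda>j. F j x) \<longlonglongrightarrow> 0"
proof -
  have "(\<integral>\<^sup>+x. (\<Sum>j. ennreal (F j x)) \<partial>M) = (\<Sum>j. \<integral>\<^sup>+x. ennreal (F j x) \<partial>M)"
    by (rule nn_integral_suminf) auto
  also have "\<dots> \<le> (\<Sum>j. ennreal (c j))"
    by (intro suminf_le bound) auto
  also have "\<dots> = ennreal (\<Sum>j. c j)"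
    using assms(4,5) by (simp add: suminf_ennreal2)
  finally have "(\<integral>\<^sup>+x. (\<Sum>j. ennreal (F j x)) \<partial>M) \<noteq> \<infinity>"
    by (auto simp: top_unique)
  then have "AE x in M. (\<Sum>j. ennreal (F j x)) \<noteq> \<infinity>"
    by (intro nn_integral_PInf_AE) auto
  then show ?thesis
  proof (rule eventually_mono)
    fix x assume "(\<Sum>j. ennreal (F j x)) \<noteq> \<infinity>"
    then have "summable (\<lambda>j. F j x)"
      using nonneg by (intro summable_suminf_not_top) auto
    then show "(\<lambda>j. F j x) \<longlonglongrightarrow> 0" by (rule summable_LIMSEQ_zero)
  qed
qed

lemma (in prob_space) integral_abs_square_le:
  fixes f :: "'a \<Rightarrow> real"
  assumes [measurable]: "f \<in> borel_measurable M" and sq: "integrable M (\<lambda>x. (f x)\<^sup>2)"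
  shows "(\<integral>x. \<bar>f x\<bar> \<partial>M)\<^sup>2 \<le> (\<integral>x. (f x)\<^sup>2 \<partial>M)"
proof -
  have "integrable M f" by (rule square_integrable_imp_integrable[OF _ sq]) simp
  then show ?thesis
    using variance_eq[of "\<lambda>x. \<bar>f x\<bar>"] variance_positive[of "\<lambda>x. \<bar>f x\<bar>"] sq by simp
qed

lemma integrable_mult_if_square_integrable:
  fixes f g :: "'a \<Rightarrow> real"
  assumes [measurable]: "f \<in> borel_measurable M" "g \<in> borel_measurable M"
    and "integrable M (\<lambda>x. (f x)\<^sup>2)" "integrable M (\<lambda>x. (g x)\<^sup>2)"
  shows "integrable M (\<lambda>x. f x * g x)"
proof (rule Bochner_Integration.integrable_bound)
  show "integrable M (\<lambda>x. ((f x)\<^sup>2 + (g x)\<^sup>2) / 2)" using assms(3,4) by auto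
  have "norm (f x * g x) \<le> norm (((f x)\<^sup>2 + (g x)\<^sup>2) / 2)" for x
    using sum_squares_bound[of "\<bar>f x\<bar>" "\<bar>g x\<bar>"] by (simp add: abs_mult)
  then show "AE x in M. norm (f x * g x) \<le> norm (((f x)\<^sup>2 + (g x)\<^sup>2) / 2)"
    by simp
qed simp

lemma integrable_bounded_mult:
  fixes u h :: "'a \<Rightarrow> real"
  assumes [measurable]: "u \<in> borel_measurable M" and "integrable M h" and "\<And>x. \<bar>u x\<bar> \<le> B"
  shows "integrable M (\<lambda>x. u x * h x)"
proof (rule Bochner_Integration.integrable_bound)
  show "integrable M (\<lambda>x. B * \<bar>h x\<bar>)" using assms(2) by simp
  have "\<bar>u x\<bar> * \<bar>h x\<bar> \<le> \<bar>B\<bar> * \<bar>h x\<bar>" for x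
    using assms(3)[of x] by (intro mult_right_mono) auto
  then show "AE x in M. norm (u x * h x) \<le> norm (B * \<bar>h x\<bar>)"
    by (simp add: abs_mult)
qed (use assms(2) in simp)

lemma powr_divide_power2:
  fixes \<epsilon> a :: real assumes "0 < \<epsilon>"
  shows "(\<epsilon> / 2^j) powr a = \<epsilon> powr a * (2 powr (-a))^j"
  using assms by (simp add: powr_divide powr_realpow[symmetric] powr_powr powr_minus_divide
      mult.commute powr_power)

lemma power2_sum_le_weighted:
  fixes d w :: "nat \<Rightarrow> real" assumes "\<And>j. 0 < w j"
  shows "(\<Sum>j<J. d j)\<^sup>2 \<le> (\<Sum>j<J. w j) * (\<Sum>j<J. (d j)\<^sup>2 / w j)"
proof -
  have "(\<Sum>j<J. (d j / sqrt (w j)) * sqrt (w j))\<^sup>2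
      \<le> (\<Sum>j<J. (d j / sqrt (w j))\<^sup>2) * (\<Sum>j<J. (sqrt (w j))\<^sup>2)"
    by (rule Cauchy_Schwarz_ineq_sum)
  moreover have "w j \<noteq> 0" for j
    using assms[of j] by simp
  ultimately show ?thesis
    using assms by (simp add: power_divide less_imp_le mult.commute)
qed

lemma square_telescope_le_weighted:
  fixes g :: "nat \<Rightarrow> real" assumes q: "0 < q" "q < 1"
  shows "(g 0 - g J)\<^sup>2 \<le> 1 / (1 - q) * (\<Sum>j<J. (g j - g (Suc j))\<^sup>2 / q^j)"
proof -
  have "(g 0 - g J)\<^sup>2 = (\<Sum>j<J. g j - g (Suc j))\<^sup>2"
    by (simp add: sum_lessThan_telescope')
  also have "\<dots> \<le> (\<Sum>j<J. q^j) * (\<Sum>j<J. (g j - g (Suc j))\<^sup>2 / q^j)"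
    using q by (intro power2_sum_le_weighted) simp
  also have "\<dots> \<le> 1 / (1 - q) * (\<Sum>j<J. (g j - g (Suc j))\<^sup>2 / q^j)"
    using geometric_sum_less[OF q, of "{..<J}"] q by (intro mult_right_mono sum_nonneg) auto
  finally show ?thesis .
qed

lemma sum_power_dist_le:
  fixes r :: real assumes r: "0 < r" "r < 1"
  shows "(\<Sum>n\<in>{1..N}. r ^ (if m \<le> n then n - m else m - n)) \<le> 2 / (1 - r)"
proof -
  let ?A = "{1..N} \<inter> {n. m \<le> n}" and ?B = "{1..N} \<inter> - {n. m \<le> n}"
  have "(\<Sum>n\<in>{1..N}. r ^ (if m \<le> n then n - m else m - n))
      = (\<Sum>n\<in>?A. r ^ (n - m)) + (\<Sum>n\<in>?B. r ^ (m - n))"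
    by (simp add: if_distrib sum.If_cases)
  also have "(\<Sum>n\<in>?A. r ^ (n - m)) = (\<Sum>k\<in>(\<lambda>n. n - m) ` ?A. r ^ k)"
    by (subst sum.reindex) (auto simp: inj_on_def)
  also have "(\<Sum>n\<in>?B. r ^ (m - n)) = (\<Sum>k\<in>(\<lambda>n. m - n) ` ?B. r ^ k)"
    by (subst sum.reindex) (auto simp: inj_on_def)
  finally show ?thesis
    using geometric_sum_less[OF r, of "(\<lambda>n. n - m) ` ?A"] geometric_sum_less[OF r, of "(\<lambda>n. m - n) ` ?B"]
    by simp
qed

lemma integral_square_sum_le:
  fixes f :: "nat \<Rightarrow> 'a \<Rightarrow> real"
  assumes [measurable]: "\<And>n. f n \<in> borel_measurable M"
    and sq: "\<And>n. 1 \<le> n \<Longrightarrow> integrable M (\<lambda>x. (f n x)\<^sup>2)"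
    and corr: "\<And>m n. 1 \<le> m \<Longrightarrow> m \<le> n \<Longrightarrow> \<bar>\<integral>x. f m x * f n x \<partial>M\<bar> \<le> c * r ^ (n - m)"
    and r: "0 < r" "r < 1" and "0 \<le> c"
  shows "integrable M (\<lambda>x. (\<Sum>n=1..N. f n x)\<^sup>2)"
    "(\<integral>x. (\<Sum>n=1..N. f n x)\<^sup>2 \<partial>M) \<le> 2 * c / (1 - r) * real N"
proof -
  have prod_int: "integrable M (\<lambda>x. f m x * f n x)" if "m \<in> {1..N}" "n \<in> {1..N}" for m n
    using that by (intro integrable_mult_if_square_integrable sq) auto
  have expand: "(\<Sum>n=1..N. f n x)\<^sup>2 = (\<Sum>m=1..N. \<Sum>n=1..N. f m x * f n x)" for x
    by (simp add: power2_eq_square sum_product)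
  show "integrable M (\<lambda>x. (\<Sum>n=1..N. f n x)\<^sup>2)"
    unfolding expand by (intro Bochner_Integration.integrable_sum prod_int)
  have corr': "(\<integral>x. f m x * f n x \<partial>M) \<le> c * r ^ (if m \<le> n then n - m else m - n)"
    if "m \<in> {1..N}" "n \<in> {1..N}" for m n
    using corr[of m n] corr[of n m] that by (auto simp: mult.commute)
  have "(\<integral>x. (\<Sum>n=1..N. f n x)\<^sup>2 \<partial>M) = (\<Sum>m=1..N. \<Sum>n=1..N. \<integral>x. f m x * f n x \<partial>M)"
    unfolding expand
    by (subst Bochner_Integration.integral_sum, fast intro: Bochner_Integration.integrable_sum prod_int)
       (intro sum.cong refl Bochner_Integration.integral_sum prod_int)
  also have "\<dots> \<le> (\<Sum>m=1..N. \<Sum>n=1..N. c * r ^ (if m \<le> n then n - m else m - n))"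
    using corr' by (intro sum_mono) auto
  also have "\<dots> \<le> (\<Sum>m=1..N. c * (2 / (1 - r)))"
    using mult_left_mono[OF sum_power_dist_le[OF r] \<open>0 \<le> c\<close>]
    by (intro sum_mono) (simp add: sum_distrib_left)
  finally show "(\<integral>x. (\<Sum>n=1..N. f n x)\<^sup>2 \<partial>M) \<le> 2 * c / (1 - r) * real N"
    by (simp add: mult_ac)
qed

section \<open>Correlations of dilates\<close>

interpretation torus_pair: pair_sigma_finite torus torus
  by (simp add: pair_sigma_finite.intro torus.sigma_finite_measure_axioms)

lemma integral_torus_eq_shift_average:
  fixes F :: "real \<Rightarrow> real"
  assumes [measurable]: "F \<in> borel_measurable borel" and per: "periodic1 F"
    and int: "integrable torus F"
  shows "(\<integral>\<xi>. F \<xi> \<partial>torus) = (\<integral>\<xi>. (\<integral>t. F (\<xi> + c * t) \<partial>torus) \<partial>torus)"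
proof -
  have "(\<integral>\<^sup>+z. ennreal (norm (F (fst z + c * snd z))) \<partial>(torus \<Otimes>\<^sub>M torus))
      = (\<integral>\<^sup>+t. (\<integral>\<^sup>+\<xi>. ennreal \<bar>F (\<xi> + c * t)\<bar> \<partial>torus) \<partial>torus)"
    by (subst torus_pair.nn_integral_snd[symmetric]) auto
  also have "\<dots> = (\<integral>\<^sup>+t. (\<integral>\<^sup>+\<xi>. ennreal \<bar>F \<xi>\<bar> \<partial>torus) \<partial>torus)"
    using nn_integral_torus_shift[of "\<lambda>x. ennreal \<bar>F x\<bar>"] per by (simp add: periodic1_def)
  also have "\<dots> < \<infinity>"
    using int by (simp add: emeasure_torus_UNIV integrable_iff_bounded)
  finally have "integrable (torus \<Otimes>\<^sub>M torus) (\<lambda>(\<xi>, t). F (\<xi> + c * t))"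
    by (simp add: integrable_iff_bounded case_prod_beta')
  then have "(\<integral>t. (\<integral>\<xi>. F (\<xi> + c * t) \<partial>torus) \<partial>torus) = (\<integral>\<xi>. (\<integral>t. F (\<xi> + c * t) \<partial>torus) \<partial>torus)"
    by (rule torus_pair.Fubini_integral)
  then show ?thesis
    by (simp add: integral_torus_shift[OF assms(1,2)])
qed

lemma abs_integral_mult_mean_zero_le:
  fixes u h :: "real \<Rightarrow> real"
  assumes [measurable]: "u \<in> borel_measurable borel" "h \<in> borel_measurable borel"
    and per: "periodic1 h" and int: "integrable torus h" and mean0: "(\<integral>x. h x \<partial>torus) = 0"
    and bounded: "\<And>y. \<bar>u y\<bar> \<le> B" and "0 \<le> \<delta>"
    and osc: "\<And>r. 0 \<le> r \<Longrightarrow> r \<le> \<delta> \<Longrightarrow> \<bar>u (y + r) - u y\<bar> \<le> M"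
  shows "\<bar>\<integral>t. u (y + \<delta> * t) * h (c + t) \<partial>torus\<bar> \<le> M * (\<integral>x. \<bar>h x\<bar> \<partial>torus)"
proof -
  have shift_h: "integrable torus (\<lambda>t. h (c + t))" "(\<integral>t. h (c + t) \<partial>torus) = 0"
    "(\<integral>t. \<bar>h (c + t)\<bar> \<partial>torus) = (\<integral>x. \<bar>h x\<bar> \<partial>torus)"
    using integrable_torus_shift_iff[of h c] integral_torus_shift[of h c]
      integral_torus_shift[of "\<lambda>x. \<bar>h x\<bar>" c] per int mean0
    by (simp_all add: add.commute periodic1_def)
  have int_prod: "integrable torus (\<lambda>t. u (y + \<delta> * t) * h (c + t))"
    by (rule integrable_bounded_mult) (measurable, rule shift_h(1), rule bounded)
  then have int_diff: "integrable torus (\<lambda>t. (u (y + \<delta> * t) - u y) * h (c + t))"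
    using shift_h(1) by (simp add: left_diff_distrib)
  \<comment> \<open>Since h has mean zero, u may be replaced by its oscillation around u y.\<close>
  have "(\<integral>t. u (y + \<delta> * t) * h (c + t) \<partial>torus) = (\<integral>t. (u (y + \<delta> * t) - u y) * h (c + t) \<partial>torus)"
    using int_prod shift_h(1,2) by (simp add: left_diff_distrib Bochner_Integration.integral_diff)
  also have "\<bar>\<dots>\<bar> \<le> (\<integral>t. M * \<bar>h (c + t)\<bar> \<partial>torus)"
  proof (rule order_trans[OF integral_abs_bound integral_mono_AE])
    show "AE t in torus. \<bar>(u (y + \<delta> * t) - u y) * h (c + t)\<bar> \<le> M * \<bar>h (c + t)\<bar>"
      using AE_torus
    proof eventually_elim
      case (elim t)
      then have "\<bar>u (y + \<delta> * t) - u y\<bar> \<le> M"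
        using \<open>0 \<le> \<delta>\<close> by (intro osc) (auto intro: mult_left_le)
      then show ?case
        by (simp add: abs_mult mult_right_mono)
    qed
  qed (use int_diff shift_h(1) in auto)
  finally show ?thesis
    using shift_h(3) by simp
qed

lemma correlation_le_oscillation:
  fixes u h :: "real \<Rightarrow> real" and a b :: nat
  assumes [measurable]: "u \<in> borel_measurable borel" "h \<in> borel_measurable borel"
    and per: "periodic1 u" "periodic1 h"
    and int: "integrable torus h" and mean0: "(\<integral>x. h x \<partial>torus) = 0"
    and bounded: "\<And>y. \<bar>u y\<bar> \<le> B"
    and osc: "\<And>y r. 0 \<le> r \<Longrightarrow> r \<le> real a / real b \<Longrightarrow> \<bar>u (y + r) - u y\<bar> \<le> M"
    and b: "0 < b"
  shows "\<bar>\<integral>\<xi>. u (real a * \<xi>) * h (real b * \<xi>) \<partial>torus\<bar> \<le> M * (\<integral>x. \<bar>h x\<bar> \<partial>torus)"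
proof -
  define F where "F \<xi> = u (real a * \<xi>) * h (real b * \<xi>)" for \<xi>
  have F_meas [measurable]: "F \<in> borel_measurable borel"
    unfolding F_def by measurable
  have F_per: "periodic1 F"
    using periodic1_dilate[OF per(1), of a] periodic1_dilate[OF per(2), of b]
    by (simp add: F_def periodic1_def)
  have F_int: "integrable torus F"
    unfolding F_def using bounded int b
    by (intro integrable_bounded_mult) (auto simp: integrable_torus_dilate_iff per(2))
  \<comment> \<open>Shifting \<xi> by t/b moves h (b \<xi>) through a whole period but u (a \<xi>) only by t a/b.\<close>
  have inner: "\<bar>\<integral>t. F (\<xi> + 1 / real b * t) \<partial>torus\<bar> \<le> M * (\<integral>x. \<bar>h x\<bar> \<partial>torus)" for \<xi>
  proof -
    have "F (\<xi> + 1 / real b * t) = u (real a * \<xi> + real a / real b * t) * h (real b * \<xi> + t)" for t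
      using b by (simp add: F_def algebra_simps)
    moreover have "\<bar>\<integral>t. u (real a * \<xi> + real a / real b * t) * h (real b * \<xi> + t) \<partial>torus\<bar>
        \<le> M * (\<integral>x. \<bar>h x\<bar> \<partial>torus)"
      by (rule abs_integral_mult_mean_zero_le[OF assms(1,2) per(2) int mean0 bounded]) (use osc in auto)
    ultimately show ?thesis
      by simp
  qed
  have "integrable torus (\<lambda>\<xi>. \<integral>t. F (\<xi> + 1 / real b * t) \<partial>torus)"
    using inner by (intro torus.integrable_const_bound[where B = "M * (\<integral>x. \<bar>h x\<bar> \<partial>torus)"]) auto
  then have "\<bar>\<integral>\<xi>. F \<xi> \<partial>torus\<bar> \<le> M * (\<integral>x. \<bar>h x\<bar> \<partial>torus)"
    unfolding integral_torus_eq_shift_average[OF F_meas F_per F_int, of "1 / real b"]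
    using inner by (intro order_trans[OF integral_abs_bound] torus.integral_le_const) auto
  then show ?thesis
    by (simp add: F_def)
qed

lemma integrable_dilates_mult:
  fixes f g :: "real \<Rightarrow> real" and a b :: nat
  assumes [measurable]: "f \<in> borel_measurable borel" "g \<in> borel_measurable borel"
    and "periodic1 f" "periodic1 g" "integrable torus (\<lambda>x. (f x)\<^sup>2)" "integrable torus (\<lambda>x. (g x)\<^sup>2)"
    and "0 < a" "0 < b"
  shows "integrable torus (\<lambda>\<xi>. f (real a * \<xi>) * g (real b * \<xi>))"
  using integrable_torus_dilate_iff[of "\<lambda>x. (f x)\<^sup>2" a] integrable_torus_dilate_iff[of "\<lambda>x. (g x)\<^sup>2" b] assms
  by (intro integrable_mult_if_square_integrable) (simp_all add: periodic1_def)

lemma correlation_le_sup_L1: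
  fixes v w :: "real \<Rightarrow> real" and a b :: nat
  assumes [measurable]: "v \<in> borel_measurable borel" "w \<in> borel_measurable borel"
    and "periodic1 v" "integrable torus v" and bounded: "\<And>y. \<bar>w y\<bar> \<le> B" and "0 < a"
  shows "\<bar>\<integral>\<xi>. v (real a * \<xi>) * w (real b * \<xi>) \<partial>torus\<bar> \<le> B * (\<integral>x. \<bar>v x\<bar> \<partial>torus)"
proof -
  have v_int: "integrable torus (\<lambda>\<xi>. v (real a * \<xi>))"
    using assms(3-6) integrable_torus_dilate_iff[of v a] by simp
  have "\<bar>\<integral>\<xi>. v (real a * \<xi>) * w (real b * \<xi>) \<partial>torus\<bar> \<le> (\<integral>\<xi>. B * \<bar>v (real a * \<xi>)\<bar> \<partial>torus)"
  proof (rule order_trans[OF integral_abs_bound integral_mono])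
    have "integrable torus (\<lambda>\<xi>. v (real a * \<xi>) * w (real b * \<xi>))"
      using integrable_bounded_mult[of "\<lambda>\<xi>. w (real b * \<xi>)" torus "\<lambda>\<xi>. v (real a * \<xi>)" B, OF _ v_int bounded]
      by (simp add: mult.commute)
    then show "integrable torus (\<lambda>\<xi>. \<bar>v (real a * \<xi>) * w (real b * \<xi>)\<bar>)"
      by (rule integrable_abs)
    show "\<bar>v (real a * \<xi>) * w (real b * \<xi>)\<bar> \<le> B * \<bar>v (real a * \<xi>)\<bar>" for \<xi>
      by (metis abs_ge_zero abs_mult bounded mult.commute mult_left_mono)
  qed (use v_int in simp)
  also have "\<dots> = B * (\<integral>x. \<bar>v x\<bar> \<partial>torus)"
    using integral_torus_dilate[of "\<lambda>x. \<bar>v x\<bar>" a] assms(3,6) by (simp add: periodic1_def)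
  finally show ?thesis .
qed

lemma correlation_le_L2:
  fixes v :: "real \<Rightarrow> real" and a b :: nat
  assumes [measurable]: "v \<in> borel_measurable borel"
    and "periodic1 v" "integrable torus (\<lambda>x. (v x)\<^sup>2)" and "0 < a" "0 < b"
  shows "\<bar>\<integral>\<xi>. v (real a * \<xi>) * v (real b * \<xi>) \<partial>torus\<bar> \<le> (\<integral>x. (v x)\<^sup>2 \<partial>torus)"
proof -
  have sq: "integrable torus (\<lambda>\<xi>. (v (real k * \<xi>))\<^sup>2)"
    "(\<integral>\<xi>. (v (real k * \<xi>))\<^sup>2 \<partial>torus) = (\<integral>x. (v x)\<^sup>2 \<partial>torus)" if "0 < k" for k
    using integrable_torus_dilate_iff[of "\<lambda>x. (v x)\<^sup>2" k] integral_torus_dilate[of "\<lambda>x. (v x)\<^sup>2" k]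
      assms(2,3) that by (simp_all add: periodic1_def)
  have "\<bar>\<integral>\<xi>. v (real a * \<xi>) * v (real b * \<xi>) \<partial>torus\<bar>
      \<le> (\<integral>\<xi>. ((v (real a * \<xi>))\<^sup>2 + (v (real b * \<xi>))\<^sup>2) / 2 \<partial>torus)"
  proof (rule order_trans[OF integral_abs_bound integral_mono])
    show "integrable torus (\<lambda>\<xi>. \<bar>v (real a * \<xi>) * v (real b * \<xi>)\<bar>)"
      using sq assms(4,5) by (simp add: integrable_mult_if_square_integrable)
    show "\<bar>v (real a * \<xi>) * v (real b * \<xi>)\<bar> \<le> ((v (real a * \<xi>))\<^sup>2 + (v (real b * \<xi>))\<^sup>2) / 2" for \<xi>
      using sum_squares_bound[of "\<bar>v (real a * \<xi>)\<bar>" "\<bar>v (real b * \<xi>)\<bar>"] by (simp add: abs_mult)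
  qed (use sq assms(4,5) in simp)
  also have "\<dots> = (\<integral>x. (v x)\<^sup>2 \<partial>torus)"
    using sq assms(4,5) by simp
  finally show ?thesis .
qed

section \<open>Lacunary sequences and geometric subsequences\<close>

text \<open>Hadamard gaps, required from index 1 on because the averages start at n = 1 (for
  \<open>2^n - 1\<close> the term n = 0 vanishes).\<close>

definition lacunary :: "real \<Rightarrow> (nat \<Rightarrow> nat) \<Rightarrow> bool" where
  "lacunary q a \<longleftrightarrow> 1 < q \<and> (\<forall>n\<ge>1. 0 < a n \<and> q * real (a n) \<le> real (a (Suc n)))"

lemma lacunary_pos: "lacunary q a \<Longrightarrow> 1 \<le> n \<Longrightarrow> 0 < a n"
  by (simp add: lacunary_def)

lemma lacunary_ratio_le:
  assumes lac: "lacunary q a" and mn: "1 \<le> m" "m \<le> n"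
  shows "real (a m) / real (a n) \<le> (1/q)^(n - m)"
  using mn(2)
proof (induction n rule: dec_induct)
  case (step n)
  have q: "1 < q" and an: "0 < a n" "q * real (a n) \<le> real (a (Suc n))"
    using lac mn(1) step(1) by (auto simp: lacunary_def)
  have "0 < q * real (a n)"
    using q an by simp
  then have "0 < real (a (Suc n)) * (q * real (a n))"
    using an(2) by simp
  then have "real (a m) / real (a (Suc n)) \<le> real (a m) / (q * real (a n))"
    using an(2) by (intro divide_left_mono) auto
  also have "\<dots> = (1/q) * (real (a m) / real (a n))"
    by simp
  also have "\<dots> \<le> (1/q) * (1/q)^(n - m)"
    using q step(3) by (intro mult_left_mono) auto
  finally show ?case
    using step(1) by (simp add: Suc_diff_le)
qed simp

lemma lacunary_mono:
  assumes "lacunary q a" "1 \<le> m" "m \<le> n" shows "a m \<le> a n"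
proof -
  have "(1/q)^(n - m) \<le> 1"
    using assms(1) by (intro power_le_one) (auto simp: lacunary_def)
  then have "real (a m) / real (a n) \<le> 1"
    using lacunary_ratio_le[OF assms] by linarith
  then show ?thesis
    using lacunary_pos[OF assms(1), of n] assms by (simp add: divide_le_eq)
qed

lemma lacunary_two_power: "lacunary 2 (\<lambda>n. 2^n - 1)"
proof -
  have "1 < (2::nat)^n" if "1 \<le> n" for n
    using that one_less_power[of "2::nat" n] by simp
  then show ?thesis
    by (simp add: lacunary_def of_nat_diff)
qed

definition geom_seq :: "real \<Rightarrow> nat \<Rightarrow> nat" where
  "geom_seq \<rho> j = nat \<lfloor>\<rho> ^ j\<rfloor>"

lemma geom_seq_bounds:
  assumes "1 \<le> \<rho>" shows "1 \<le> geom_seq \<rho> j" "\<rho> ^ j - 1 < real (geom_seq \<rho> j)" "real (geom_seq \<rho> j) \<le> \<rho> ^ j"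
proof -
  have "1 \<le> \<rho> ^ j" using assms by simp
  then show "1 \<le> geom_seq \<rho> j" "\<rho> ^ j - 1 < real (geom_seq \<rho> j)" "real (geom_seq \<rho> j) \<le> \<rho> ^ j"
    by (simp_all add: geom_seq_def le_nat_iff le_floor_iff)
qed

lemma mono_geom_seq: "1 \<le> \<rho> \<Longrightarrow> mono (geom_seq \<rho>)"
  by (auto simp: mono_def geom_seq_def intro!: nat_mono floor_mono power_increasing)

lemma geom_seq_unbounded:
  assumes "1 < \<rho>" obtains j where "M < geom_seq \<rho> j"
proof -
  obtain j where "real M + 1 < \<rho> ^ j"
    using real_arch_pow[OF assms] by blast
  with geom_seq_bounds(2)[of \<rho> j] assms show thesis
    by (intro that[of j]) simp
qed

lemma geom_seq_ratio_tendsto: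
  assumes \<rho>: "1 < \<rho>"
  shows "(\<lambda>j. real (geom_seq \<rho> (Suc j)) / real (geom_seq \<rho> j)) \<longlonglongrightarrow> \<rho>"
proof -
  have normalized: "(\<lambda>j. real (geom_seq \<rho> j) / \<rho> ^ j) \<longlonglongrightarrow> 1"
  proof (rule tendsto_sandwich)
    have "(\<lambda>j. 1 - (1 / \<rho>) ^ j) \<longlonglongrightarrow> 1 - 0"
      using \<rho> by (intro tendsto_intros LIMSEQ_power_zero) auto
    then show "(\<lambda>j. 1 - (1 / \<rho>) ^ j) \<longlonglongrightarrow> 1" by simp
    show "\<forall>\<^sub>F j in sequentially. 1 - (1 / \<rho>) ^ j \<le> real (geom_seq \<rho> j) / \<rho> ^ j"
    proof (intro always_eventually allI)
      fix j
      have "1 - (1 / \<rho>) ^ j = (\<rho> ^ j - 1) / \<rho> ^ j"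
        using \<rho> by (simp add: power_one_over field_simps)
      also have "\<dots> \<le> real (geom_seq \<rho> j) / \<rho> ^ j"
        using geom_seq_bounds(2)[of \<rho> j] \<rho> by (intro divide_right_mono) auto
      finally show "1 - (1 / \<rho>) ^ j \<le> real (geom_seq \<rho> j) / \<rho> ^ j" .
    qed
    show "\<forall>\<^sub>F j in sequentially. real (geom_seq \<rho> j) / \<rho> ^ j \<le> 1"
      using geom_seq_bounds(3)[of \<rho>] \<rho> by simp
  qed simp
  have "(\<lambda>j. \<rho> * (real (geom_seq \<rho> (Suc j)) / \<rho> ^ Suc j) / (real (geom_seq \<rho> j) / \<rho> ^ j))
      \<longlonglongrightarrow> \<rho> * 1 / 1"
    by (intro tendsto_intros normalized LIMSEQ_Suc[OF normalized]) simp
  moreover have "\<rho> * (real (geom_seq \<rho> (Suc j)) / \<rho> ^ Suc j) / (real (geom_seq \<rho> j) / \<rho> ^ j)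
      = real (geom_seq \<rho> (Suc j)) / real (geom_seq \<rho> j)" for j
    using \<rho> by (simp add: field_simps)
  ultimately show ?thesis by (simp only: mult_1_right div_by_1)
qed

lemma geom_seq_bracket:
  assumes \<rho>: "1 < \<rho>" and N: "geom_seq \<rho> J \<le> N"
  obtains j where "J \<le> j" "geom_seq \<rho> j \<le> N" "N < geom_seq \<rho> (Suc j)"
proof -
  have mono: "i \<le> j \<Longrightarrow> geom_seq \<rho> i \<le> geom_seq \<rho> j" for i j
    using mono_geom_seq[of \<rho>] \<rho> by (simp add: mono_def)
  have "N < geom_seq \<rho> k \<Longrightarrow> \<exists>j\<ge>J. geom_seq \<rho> j \<le> N \<and> N < geom_seq \<rho> (Suc j)" for k
  proof (induction k)
    case 0
    then show ?case using mono[of 0 J] N by simp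
  next
    case (Suc k)
    show ?case
    proof (cases "N < geom_seq \<rho> k")
      case False
      have "J \<le> k"
      proof (rule ccontr)
        assume "\<not> J \<le> k"
        then show False using mono[of "Suc k" J] N Suc.prems by simp
      qed
      with False Suc.prems show ?thesis by (auto simp: not_less)
    qed (rule Suc.IH)
  qed
  then show thesis
    using geom_seq_unbounded[OF \<rho>, of N] that by blast
qed

lemma AE_geom_seq_average_tendsto_zero:
  fixes S :: "nat \<Rightarrow> 'a \<Rightarrow> real"
  assumes [measurable]: "\<And>N. S N \<in> borel_measurable M"
    and int: "\<And>N. integrable M (\<lambda>x. (S N x)\<^sup>2)"
    and bound: "\<And>N. (\<integral>x. (S N x)\<^sup>2 \<partial>M) \<le> K * real N"
    and \<rho>: "1 < \<rho>"
  shows "AE x in M. (\<lambda>j. S (geom_seq \<rho> j) x / real (geom_seq \<rho> j)) \<longlonglongrightarrow> 0"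
proof -
  have N: "1 \<le> real (geom_seq \<rho> j)" "\<rho> ^ j / 2 \<le> real (geom_seq \<rho> j)" for j
    using geom_seq_bounds[of \<rho> j] \<rho> by (auto simp: field_simps)
  have "0 \<le> (\<integral>x. (S 1 x)\<^sup>2 \<partial>M)"
    by (rule Bochner_Integration.integral_nonneg) simp
  then have K: "0 \<le> K" using order_trans[OF _ bound[of 1]] by simp
  have "(\<integral>\<^sup>+x. ennreal ((S (geom_seq \<rho> j) x / real (geom_seq \<rho> j))\<^sup>2) \<partial>M)
      \<le> ennreal (2 * K * (1 / \<rho>) ^ j)" for j
  proof -
    have "(\<integral>x. (S (geom_seq \<rho> j) x / real (geom_seq \<rho> j))\<^sup>2 \<partial>M)
        = (\<integral>x. (S (geom_seq \<rho> j) x)\<^sup>2 \<partial>M) / (real (geom_seq \<rho> j))\<^sup>2"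
      by (simp add: power_divide)
    also have "\<dots> \<le> K / real (geom_seq \<rho> j)"
      using bound[of "geom_seq \<rho> j"] N(1)[of j] by (simp add: power2_eq_square divide_le_eq)
    also have "\<dots> \<le> 2 * K * (1 / \<rho>) ^ j"
      using N[of j] K \<rho> by (simp add: divide_le_eq power_one_over field_simps mult_left_mono)
    finally show ?thesis
      using int[of "geom_seq \<rho> j"] by (simp add: nn_integral_eq_integral power_divide ennreal_leI)
  qed
  then have "AE x in M. (\<lambda>j. (S (geom_seq \<rho> j) x / real (geom_seq \<rho> j))\<^sup>2) \<longlonglongrightarrow> 0"
    using K \<rho> by (intro AE_tendsto_zero_if_summable_nn_integral[where c = "\<lambda>j. 2 * K * (1 / \<rho>) ^ j"])
      (auto intro: summable_mult summable_geometric)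
  then show ?thesis
  proof (rule eventually_mono)
    fix x assume "(\<lambda>j. (S (geom_seq \<rho> j) x / real (geom_seq \<rho> j))\<^sup>2) \<longlonglongrightarrow> 0"
    then have "(\<lambda>j. sqrt ((S (geom_seq \<rho> j) x / real (geom_seq \<rho> j))\<^sup>2)) \<longlonglongrightarrow> sqrt 0"
      by (rule tendsto_real_sqrt)
    then show "(\<lambda>j. S (geom_seq \<rho> j) x / real (geom_seq \<rho> j)) \<longlonglongrightarrow> 0"
      by (subst tendsto_rabs_zero_iff[symmetric]) (simp only: real_sqrt_abs real_sqrt_zero)
  qed
qed

lemma cesaro_bounds_from_geom_seq:
  fixes z :: "nat \<Rightarrow> real"
  assumes nonneg: "\<And>n. 0 \<le> z n" and \<rho>: "1 < \<rho>"
    and lim: "(\<lambda>j. (\<Sum>n=1..geom_seq \<rho> j. z n) / real (geom_seq \<rho> j)) \<longlonglongrightarrow> L" and "0 < \<epsilon>"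
  shows "\<forall>\<^sub>F N in sequentially.
    L / \<rho> - \<epsilon> < (\<Sum>n=1..N. z n) / real N \<and> (\<Sum>n=1..N. z n) / real N < L * \<rho> + \<epsilon>"
proof -
  define g where "g = geom_seq \<rho>"
  define S where "S N = (\<Sum>n=1..N. z n)" for N
  have g: "0 < real (g j)" for j
    using geom_seq_bounds(1)[of \<rho> j] \<rho> by (simp add: g_def)
  have S_mono: "M \<le> N \<Longrightarrow> S M \<le> S N" for M N
    unfolding S_def using nonneg by (intro sum_mono2) auto
  have ratio: "(\<lambda>j. real (g (Suc j)) / real (g j)) \<longlonglongrightarrow> \<rho>"
    unfolding g_def by (rule geom_seq_ratio_tendsto[OF \<rho>])
  have eq: "S (g (Suc j)) / real (g (Suc j)) * (real (g (Suc j)) / real (g j)) = S (g (Suc j)) / real (g j)"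
    "S (g j) / real (g j) / (real (g (Suc j)) / real (g j)) = S (g j) / real (g (Suc j))" for j
    using g[of j] g[of "Suc j"] by simp_all
  have "(\<lambda>j. S (g (Suc j)) / real (g (Suc j)) * (real (g (Suc j)) / real (g j))) \<longlonglongrightarrow> L * \<rho>"
    using LIMSEQ_Suc[OF lim] ratio by (intro tendsto_mult) (simp_all add: S_def g_def)
  moreover have "(\<lambda>j. S (g j) / real (g j) / (real (g (Suc j)) / real (g j))) \<longlonglongrightarrow> L / \<rho>"
    using lim ratio \<rho> by (intro tendsto_divide) (simp_all add: S_def g_def)
  ultimately have "(\<lambda>j. S (g (Suc j)) / real (g j)) \<longlonglongrightarrow> L * \<rho>" "(\<lambda>j. S (g j) / real (g (Suc j))) \<longlonglongrightarrow> L / \<rho>"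
    unfolding eq .
  then have upper: "\<forall>\<^sub>F j in sequentially. S (g (Suc j)) / real (g j) < L * \<rho> + \<epsilon>"
    and lower: "\<forall>\<^sub>F j in sequentially. L / \<rho> - \<epsilon> < S (g j) / real (g (Suc j))"
    using \<open>0 < \<epsilon>\<close> by (auto intro: order_tendstoD)
  obtain J where J: "\<And>j. J \<le> j \<Longrightarrow> S (g (Suc j)) / real (g j) < L * \<rho> + \<epsilon> \<and> L / \<rho> - \<epsilon> < S (g j) / real (g (Suc j))"
    using eventually_conj[OF upper lower] unfolding eventually_sequentially by blast
  show ?thesis
  proof (rule eventually_sequentiallyI[of "g J"])
    fix N assume "g J \<le> N"
    then obtain j where j: "J \<le> j" "g j \<le> N" "N < g (Suc j)"
      using geom_seq_bracket[OF \<rho>] unfolding g_def by blast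
    have S_nonneg: "0 \<le> S M" for M
      unfolding S_def using nonneg by (intro sum_nonneg) auto
    have "S N / real N \<le> S (g (Suc j)) / real (g j)"
      using S_mono[of N "g (Suc j)"] S_nonneg j g[of j] by (intro frac_le) auto
    moreover have "S (g j) / real (g (Suc j)) \<le> S N / real N"
      using S_mono[of "g j" N] S_nonneg j g[of j] by (intro frac_le) auto
    ultimately show "L / \<rho> - \<epsilon> < (\<Sum>n=1..N. z n) / real N \<and> (\<Sum>n=1..N. z n) / real N < L * \<rho> + \<epsilon>"
      using J[OF j(1)] unfolding S_def by linarith
  qed
qed

lemma cesaro_from_geom_seq:
  fixes z :: "nat \<Rightarrow> real"
  assumes nonneg: "\<And>n. 0 \<le> z n"
    and lim: "\<And>\<rho>. \<rho> \<in> \<rat> \<Longrightarrow> 1 < \<rho> \<Longrightarrow> (\<lambda>j. (\<Sum>n=1..geom_seq \<rho> j. z n) / real (geom_seq \<rho> j)) \<longlonglongrightarrow> L"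
  shows "(\<lambda>N. (\<Sum>n=1..N. z n) / real N) \<longlonglongrightarrow> L"
proof -
  have "L \<ge> 0"
    using lim[of 2] nonneg by (auto intro!: LIMSEQ_le_const sum_nonneg divide_nonneg_nonneg)
  have rat_above_1: "\<exists>\<rho>\<in>\<rat>. 1 < \<rho> \<and> \<rho> < b" if "1 < b" for b :: real
    using Rats_dense_in_real[OF that] by blast
  show ?thesis
  proof (rule order_tendstoI)
    fix a assume "a < L"
    obtain \<rho> where \<rho>: "\<rho> \<in> \<rat>" "1 < \<rho>" "a < L / \<rho>"
    proof (cases "0 < a")
      case True
      then obtain \<rho> where "\<rho> \<in> \<rat>" "1 < \<rho>" "\<rho> < L / a"
        using rat_above_1[of "L / a"] \<open>a < L\<close> by auto
      then show thesis using True by (intro that[of \<rho>]) (auto simp: field_simps)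
    next
      case False
      then show thesis using \<open>a < L\<close> \<open>L \<ge> 0\<close> that[of 2] by (auto simp: field_simps)
    qed
    show "\<forall>\<^sub>F N in sequentially. a < (\<Sum>n=1..N. z n) / real N"
      using cesaro_bounds_from_geom_seq[OF nonneg \<rho>(2) lim[OF \<rho>(1,2)], of "L / \<rho> - a"] \<rho>(3)
      by (auto elim: eventually_mono)
  next
    fix a assume "L < a"
    obtain \<rho> where \<rho>: "\<rho> \<in> \<rat>" "1 < \<rho>" "L * \<rho> < a"
    proof (cases "L = 0")
      case True
      then show thesis using \<open>L < a\<close> that[of 2] by auto
    next
      case False
      then obtain \<rho> where "\<rho> \<in> \<rat>" "1 < \<rho>" "\<rho> < a / L"
        using rat_above_1[of "a / L"] \<open>L < a\<close> \<open>L \<ge> 0\<close> by (auto simp: field_simps)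
      then show thesis using False \<open>L \<ge> 0\<close> by (intro that[of \<rho>]) (auto simp: field_simps)
    qed
    show "\<forall>\<^sub>F N in sequentially. (\<Sum>n=1..N. z n) / real N < a"
      using cesaro_bounds_from_geom_seq[OF nonneg \<rho>(2) lim[OF \<rho>(1,2)], of "a - L * \<rho>"] \<rho>(3)
      by (auto elim: eventually_mono)
  qed
qed

section \<open>Local means of a square integrable periodic function\<close>

locale periodic_L2 =
  fixes h :: "real \<Rightarrow> real"
  assumes measurable [measurable]: "h \<in> borel_measurable borel"
    and periodic: "periodic1 h"
    and square_integrable: "integrable torus (\<lambda>x. (h x)\<^sup>2)"
begin

lemma integrable: "integrable torus h"
  by (rule torus.square_integrable_imp_integrable) (measurable, rule square_integrable)

definition sq_norm :: real where
  "sq_norm = (\<integral>x. (h x)\<^sup>2 \<partial>torus)"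

lemma sq_norm_nonneg: "0 \<le> sq_norm"
  by (simp add: sq_norm_def)

definition avg :: "real \<Rightarrow> real \<Rightarrow> real" where
  "avg s y = (\<integral>t. h (y + s * t) \<partial>torus)"

lemma avg_measurable [measurable]: "avg s \<in> borel_measurable borel"
  unfolding avg_def[abs_def] by measurable

lemma periodic_avg: "periodic1 (avg s)"
proof -
  have "h (y + 1 + s * t) = h (y + s * t)" for y t
    using periodic unfolding periodic1_def by (metis add.commute add.assoc)
  then show ?thesis by (simp add: periodic1_def avg_def)
qed

lemma square_integrable_rescale:
  assumes "0 < s" "s \<le> 1"
  shows "integrable torus (\<lambda>t. (h (y + s * t))\<^sup>2)" "(\<integral>t. (h (y + s * t))\<^sup>2 \<partial>torus) \<le> sq_norm / s"
proof -
  have "(\<integral>\<^sup>+t. ennreal ((h (y + s * t))\<^sup>2) \<partial>torus) \<le> ennreal (1/s) * (\<integral>\<^sup>+x. ennreal ((h x)\<^sup>2) \<partial>torus)"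
    using periodic assms by (intro nn_integral_torus_rescale_le) (auto simp: periodic1_def)
  also have "\<dots> = ennreal (sq_norm / s)"
    using square_integrable assms sq_norm_nonneg
    by (simp add: nn_integral_eq_integral sq_norm_def ennreal_mult[symmetric])
  finally have *: "(\<integral>\<^sup>+t. ennreal ((h (y + s * t))\<^sup>2) \<partial>torus) \<le> ennreal (sq_norm / s)" .
  show "integrable torus (\<lambda>t. (h (y + s * t))\<^sup>2)" "(\<integral>t. (h (y + s * t))\<^sup>2 \<partial>torus) \<le> sq_norm / s"
    using nn_integral_le_imp_integral_le[OF _ _ *] sq_norm_nonneg assms by auto
qed

lemma integrable_rescale: "0 < s \<Longrightarrow> s \<le> 1 \<Longrightarrow> integrable torus (\<lambda>t. h (y + s * t))"
  by (rule torus.square_integrable_imp_integrable) (measurable, rule square_integrable_rescale(1))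

lemma abs_avg_le:
  assumes "0 < s" "s \<le> 1"
  shows "\<bar>avg s y\<bar> \<le> sqrt (sq_norm / s)"
proof -
  have "(\<integral>t. \<bar>h (y + s * t)\<bar> \<partial>torus)\<^sup>2 \<le> (\<integral>t. (h (y + s * t))\<^sup>2 \<partial>torus)"
    by (rule torus.integral_abs_square_le) (measurable, rule square_integrable_rescale(1)[OF assms])
  also have "\<dots> \<le> sq_norm / s"
    by (rule square_integrable_rescale(2)[OF assms])
  finally have "(\<integral>t. \<bar>h (y + s * t)\<bar> \<partial>torus)\<^sup>2 \<le> sq_norm / s" .
  then have "(\<integral>t. \<bar>h (y + s * t)\<bar> \<partial>torus) \<le> sqrt (sq_norm / s)"
    by (simp add: real_le_rsqrt)
  then show ?thesis
    unfolding avg_def by (rule order_trans[OF integral_abs_bound])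
qed

lemma integrable_avg: "0 < s \<Longrightarrow> s \<le> 1 \<Longrightarrow> integrable torus (avg s)"
  using abs_avg_le by (intro torus.integrable_const_bound[where B = "sqrt (sq_norm / s)"]) auto

lemma square_integrable_avg:
  assumes "0 < s" "s \<le> 1" shows "integrable torus (\<lambda>y. (avg s y)\<^sup>2)"
proof (rule torus.integrable_const_bound[where B = "sq_norm / s"])
  have "(avg s y)\<^sup>2 \<le> sq_norm / s" for y
    using power_mono[OF abs_avg_le[OF assms, of y] abs_ge_zero, of 2] assms sq_norm_nonneg by simp
  then show "AE y in torus. norm ((avg s y)\<^sup>2) \<le> sq_norm / s"
    by simp
qed simp

lemma set_integral_window: "0 < s \<Longrightarrow> (LINT x:{y..<y+s}|lborel. h x) = s * avg s y"
  unfolding avg_def by (rule integral_torus_rescale[symmetric]) simp_all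

lemma set_integrable_window:
  assumes "0 < w" "w \<le> 1" shows "set_integrable lborel {z..<z+w} h"
proof -
  have "(\<integral>\<^sup>+x. ennreal (norm (indicator {z..<z+w} x *\<^sub>R h x)) \<partial>lborel)
      = (\<integral>\<^sup>+x. indicator {z..<z+w} x * ennreal \<bar>h x\<bar> \<partial>lborel)"
    by (intro nn_integral_cong) (auto simp: indicator_def)
  also have "\<dots> = ennreal w * (\<integral>\<^sup>+t. ennreal \<bar>h (z + w * t)\<bar> \<partial>torus)"
    by (rule nn_integral_torus_rescale[symmetric]) (use assms in auto)
  also have "\<dots> < \<infinity>"
    using integrable_rescale[OF assms, of z] by (simp add: integrable_iff_bounded ennreal_mult_less_top)
  finally show ?thesis
    unfolding set_integrable_def by (simp add: integrable_iff_bounded)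
qed

lemma abs_set_integral_window_le:
  assumes "0 < w" "w \<le> 1" shows "\<bar>LINT x:{z..<z+w}|lborel. h x\<bar> \<le> sqrt (sq_norm * w)"
proof -
  have "\<bar>LINT x:{z..<z+w}|lborel. h x\<bar> = w * \<bar>avg w z\<bar>"
    using assms by (simp add: set_integral_window abs_mult)
  also have "\<dots> \<le> w * sqrt (sq_norm / w)"
    using abs_avg_le[OF assms] assms by (intro mult_left_mono) auto
  also have "w * sqrt (sq_norm / w) = sqrt sq_norm * (w / sqrt w)"
    by (simp add: real_sqrt_divide)
  also have "w / sqrt w = sqrt w"
    using assms by (simp add: real_div_sqrt)
  finally show ?thesis by (simp add: real_sqrt_mult)
qed

lemma abs_avg_shift_le:
  assumes r: "0 \<le> r" "r \<le> 1" and s: "0 < s" "s \<le> 1"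
  shows "\<bar>avg s (y + r) - avg s y\<bar> \<le> 2 * sqrt (sq_norm * r) / s"
proof (cases "s \<le> r")
  case True
  have "s \<le> sqrt s * sqrt r"
    using True s mult_left_mono[of "sqrt s" "sqrt r" "sqrt s"] by simp
  then have "1 / sqrt s \<le> sqrt r / s"
    using s by (simp add: field_simps)
  then have "sqrt sq_norm * (1 / sqrt s) \<le> sqrt sq_norm * (sqrt r / s)"
    by (rule mult_left_mono) (simp add: sq_norm_nonneg)
  then have "sqrt (sq_norm / s) \<le> sqrt (sq_norm * r) / s"
    by (simp add: real_sqrt_divide real_sqrt_mult)
  then show ?thesis
    using abs_avg_le[OF s, of "y + r"] abs_avg_le[OF s, of y] by linarith
next
  case False
  then have "r < s" by simp
  show ?thesis
  proof (cases "r = 0")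
    case False
    with r have r': "0 < r" "r \<le> 1" by auto
    \<comment> \<open>The windows of length s at y and at y + r differ by two windows of length r.\<close>
    have "s * (avg s (y + r) - avg s y)
        = (LINT x:{y+r..<y+r+s}|lborel. h x) - (LINT x:{y..<y+s}|lborel. h x)"
      using set_integral_window[OF s(1), of "y + r"] set_integral_window[OF s(1), of y]
      by (simp add: right_diff_distrib)
    also have "\<dots> = (\<integral>x. indicator {y+r..<y+r+s} x * h x - indicator {y..<y+s} x * h x \<partial>lborel)"
      using set_integrable_window[OF s, of y] set_integrable_window[OF s, of "y + r"]
      unfolding set_lebesgue_integral_def set_integrable_def
      by (subst Bochner_Integration.integral_diff) (auto simp: add.assoc)
    also have "\<dots> = (\<integral>x. indicator {y+s..<y+s+r} x * h x - indicator {y..<y+r} x * h x \<partial>lborel)"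
      using \<open>r < s\<close> r by (intro Bochner_Integration.integral_cong) (auto simp: indicator_def)
    also have "\<dots> = (LINT x:{y+s..<y+s+r}|lborel. h x) - (LINT x:{y..<y+r}|lborel. h x)"
      using set_integrable_window[OF r', of y] set_integrable_window[OF r', of "y + s"]
      unfolding set_lebesgue_integral_def set_integrable_def
      by (subst Bochner_Integration.integral_diff) (auto simp: add.assoc)
    finally have "s * \<bar>avg s (y + r) - avg s y\<bar> \<le> 2 * sqrt (sq_norm * r)"
      using abs_set_integral_window_le[OF r', of "y + s"] abs_set_integral_window_le[OF r', of y] s
      by (simp add: abs_mult)
    then show ?thesis
      using s by (simp add: field_simps)
  qed simp
qed

end

section \<open>Functions with L1 modulus of continuity O(delta powr alpha), alpha > 1/2\<close>

locale L1_hoelder = periodic_L2 +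
  fixes C \<alpha> :: real
  assumes exponent: "1/2 < \<alpha>"
    and const_nonneg: "0 \<le> C"
    and L1_modulus_le: "\<And>\<delta>. 0 < \<delta> \<Longrightarrow> \<delta> \<le> 1 \<Longrightarrow> (\<integral>x. \<bar>h (x + \<delta>) - h x\<bar> \<partial>torus) \<le> C * \<delta> powr \<alpha>"
begin

lemma nn_L1_modulus_le:
  assumes "0 < \<delta>" "\<delta> \<le> 1"
  shows "(\<integral>\<^sup>+x. ennreal \<bar>h (x + \<delta>) - h x\<bar> \<partial>torus) \<le> ennreal (C * \<delta> powr \<alpha>)"
proof -
  have "integrable torus (\<lambda>x. h (x + \<delta>))"
    using integrable_torus_shift_iff[OF measurable periodic] integrable by simp
  then have "(\<integral>\<^sup>+x. ennreal \<bar>h (x + \<delta>) - h x\<bar> \<partial>torus) = ennreal (\<integral>x. \<bar>h (x + \<delta>) - h x\<bar> \<partial>torus)"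
    using integrable by (intro nn_integral_eq_integral) auto
  then show ?thesis
    using L1_modulus_le[OF assms] by (simp add: ennreal_leI)
qed

lemma avg_L1_approx:
  assumes s: "0 < s" "s \<le> 1"
  shows "integrable torus (\<lambda>y. avg s y - h y)" "(\<integral>y. \<bar>avg s y - h y\<bar> \<partial>torus) \<le> C * s powr \<alpha>"
proof -
  show int: "integrable torus (\<lambda>y. avg s y - h y)"
    using torus.integrable_const_bound[of "avg s" "sqrt (sq_norm / s)"] abs_avg_le[OF s] integrable
    by simp
  have pointwise: "ennreal \<bar>avg s y - h y\<bar> \<le> (\<integral>\<^sup>+t. ennreal \<bar>h (y + s * t) - h y\<bar> \<partial>torus)" for y
  proof -
    have "avg s y - h y = (\<integral>t. h (y + s * t) - h y \<partial>torus)"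
      using integrable_rescale[OF s, of y] by (simp add: avg_def)
    then show ?thesis
      using integral_norm_bound_ennreal[of torus "\<lambda>t. h (y + s * t) - h y"] integrable_rescale[OF s, of y]
      by simp
  qed
  have "(\<integral>\<^sup>+y. ennreal \<bar>avg s y - h y\<bar> \<partial>torus)
      \<le> (\<integral>\<^sup>+y. (\<integral>\<^sup>+t. ennreal \<bar>h (y + s * t) - h y\<bar> \<partial>torus) \<partial>torus)"
    by (intro nn_integral_mono pointwise)
  also have "\<dots> = (\<integral>\<^sup>+t. (\<integral>\<^sup>+y. ennreal \<bar>h (y + s * t) - h y\<bar> \<partial>torus) \<partial>torus)"
    by (rule torus_pair.Fubini') measurable
  also have "\<dots> \<le> (\<integral>\<^sup>+t. ennreal (C * s powr \<alpha>) \<partial>torus)"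
  proof (rule nn_integral_mono_AE)
    show "AE t in torus. (\<integral>\<^sup>+y. ennreal \<bar>h (y + s * t) - h y\<bar> \<partial>torus) \<le> ennreal (C * s powr \<alpha>)"
      using AE_torus
    proof eventually_elim
      case (elim t)
      show ?case
      proof (cases "t = 0")
        case False
        with elim s have st: "0 < s * t" "s * t \<le> 1" by (auto simp: mult_le_one)
        have "(s * t) powr \<alpha> \<le> s powr \<alpha>"
          using exponent st elim s by (intro powr_mono2) (auto simp: mult_left_le)
        then show ?thesis
          using order_trans[OF nn_L1_modulus_le[OF st]] const_nonneg
          by (simp add: ennreal_leI mult_left_mono)
      qed simp
    qed
  qed
  finally have "(\<integral>\<^sup>+y. ennreal \<bar>avg s y - h y\<bar> \<partial>torus) \<le> ennreal (C * s powr \<alpha>)"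
    by (simp add: emeasure_torus_UNIV)
  then show "(\<integral>y. \<bar>avg s y - h y\<bar> \<partial>torus) \<le> C * s powr \<alpha>"
    using nn_integral_le_imp_integral_le(2)[of "\<lambda>y. \<bar>avg s y - h y\<bar>"] const_nonneg by simp
qed

lemma abs_avg_halving_le:
  assumes "0 < s" "s \<le> 1"
  shows "\<bar>avg s y - avg (s/2) y\<bar> \<le> 2 * sqrt (2 * sq_norm / s)"
proof -
  have "sqrt (sq_norm / s) \<le> sqrt (2 * sq_norm / s)"
    using assms sq_norm_nonneg by (intro real_sqrt_le_mono divide_right_mono) auto
  moreover have "\<bar>avg (s/2) y\<bar> \<le> sqrt (2 * sq_norm / s)"
    using abs_avg_le[of "s/2" y] assms by (simp add: mult.commute)
  ultimately show ?thesis
    using abs_avg_le[OF assms, of y] by linarith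
qed

lemma avg_halving_L1:
  assumes s: "0 < s" "s \<le> 1"
  shows "(\<integral>y. \<bar>avg s y - avg (s/2) y\<bar> \<partial>torus) \<le> 2 * C * s powr \<alpha>"
proof -
  have s2: "0 < s/2" "s/2 \<le> 1" using s by auto
  have "(\<integral>y. \<bar>avg s y - avg (s/2) y\<bar> \<partial>torus)
      \<le> (\<integral>y. \<bar>avg s y - h y\<bar> + \<bar>avg (s/2) y - h y\<bar> \<partial>torus)"
    using avg_L1_approx(1)[OF s] avg_L1_approx(1)[OF s2] integrable_avg[OF s] integrable_avg[OF s2]
    by (intro integral_mono) auto
  also have "\<dots> \<le> C * s powr \<alpha> + C * (s/2) powr \<alpha>"
    using avg_L1_approx[OF s] avg_L1_approx[OF s2] by simp
  also have "C * (s/2) powr \<alpha> \<le> C * s powr \<alpha>"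
    using s exponent const_nonneg by (intro mult_left_mono powr_mono2) auto
  finally show ?thesis by simp
qed

lemma avg_halving_L2:
  assumes s: "0 < s" "s \<le> 1"
  shows "integrable torus (\<lambda>y. (avg s y - avg (s/2) y)\<^sup>2)"
    "(\<integral>y. (avg s y - avg (s/2) y)\<^sup>2 \<partial>torus) \<le> 4 * sqrt (2 * sq_norm) * C * s powr (\<alpha> - 1/2)"
proof -
  define M where "M = 2 * sqrt (2 * sq_norm / s)"
  have bound: "\<bar>avg s y - avg (s/2) y\<bar> \<le> M" for y
    unfolding M_def by (rule abs_avg_halving_le[OF s])
  have "0 \<le> M" using order_trans[OF abs_ge_zero bound] .
  show int: "integrable torus (\<lambda>y. (avg s y - avg (s/2) y)\<^sup>2)"
  proof (rule torus.integrable_const_bound[where B = "M\<^sup>2"])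
    have "(avg s y - avg (s/2) y)\<^sup>2 \<le> M\<^sup>2" for y
      using power_mono[OF bound[of y] abs_ge_zero, of 2] by simp
    then show "AE y in torus. norm ((avg s y - avg (s/2) y)\<^sup>2) \<le> M\<^sup>2"
      by simp
  qed simp
  have int_abs: "integrable torus (\<lambda>y. \<bar>avg s y - avg (s/2) y\<bar>)"
    using integrable_avg[OF s] integrable_avg[of "s/2"] s by simp
  have "(avg s y - avg (s/2) y)\<^sup>2 \<le> M * \<bar>avg s y - avg (s/2) y\<bar>" for y
    using mult_right_mono[OF bound[of y] abs_ge_zero[of "avg s y - avg (s/2) y"]]
    by (simp add: power2_eq_square abs_mult_self_eq)
  then have "(\<integral>y. (avg s y - avg (s/2) y)\<^sup>2 \<partial>torus) \<le> (\<integral>y. M * \<bar>avg s y - avg (s/2) y\<bar> \<partial>torus)"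
    using int int_abs by (intro integral_mono) auto
  also have "\<dots> \<le> M * (2 * C * s powr \<alpha>)"
    using avg_halving_L1[OF s] \<open>0 \<le> M\<close> by (simp add: mult_left_mono)
  also have "\<dots> = 4 * sqrt (2 * sq_norm) * C * s powr (\<alpha> - 1/2)"
    using s by (simp add: M_def powr_diff powr_half_sqrt[symmetric] real_sqrt_divide)
  finally show "(\<integral>y. (avg s y - avg (s/2) y)\<^sup>2 \<partial>torus) \<le> 4 * sqrt (2 * sq_norm) * C * s powr (\<alpha> - 1/2)" .
qed

lemma avg_dyadic_L2:
  assumes e: "0 < \<epsilon>" "\<epsilon> \<le> 1"
  defines "q \<equiv> 2 powr (- (\<alpha> - 1/2) / 2)"
  shows "integrable torus (\<lambda>y. (avg \<epsilon> y - avg (\<epsilon>/2^J) y)\<^sup>2)"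
    "(\<integral>y. (avg \<epsilon> y - avg (\<epsilon>/2^J) y)\<^sup>2 \<partial>torus)
       \<le> 4 * sqrt (2 * sq_norm) * C / (1 - q)\<^sup>2 * \<epsilon> powr (\<alpha> - 1/2)"
proof -
  define K where "K = 4 * sqrt (2 * sq_norm) * C * \<epsilon> powr (\<alpha> - 1/2)"
  have q: "0 < q" "q < 1" using exponent by (auto simp: q_def intro: powr_less_one)
  have s: "0 < \<epsilon>/2^j" "\<epsilon>/2^j \<le> 1" for j :: nat
    using e by (auto simp: divide_le_eq order_trans[OF _ one_le_power])
  define D where "D j y = (avg (\<epsilon>/2^j) y - avg (\<epsilon>/2^Suc j) y)\<^sup>2" for j y
  have D_int: "integrable torus (D j)" for j
    using avg_halving_L2(1)[OF s, of j] by (simp add: D_def[abs_def] mult.commute)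
  have D_L2: "(\<integral>y. D j y \<partial>torus) \<le> K * q^j * q^j" for j
  proof -
    have "q * q = 2 powr (- (\<alpha> - 1/2))"
      by (simp add: q_def powr_add[symmetric])
    then have "(\<epsilon>/2^j) powr (\<alpha> - 1/2) = \<epsilon> powr (\<alpha> - 1/2) * (q^j * q^j)"
      using powr_divide_power2[OF e(1), of j "\<alpha> - 1/2"] by (simp add: power_mult_distrib[symmetric])
    then show ?thesis
      using avg_halving_L2(2)[OF s, of j] by (simp add: D_def K_def mult_ac)
  qed
  define W where "W y = 1 / (1 - q) * (\<Sum>j<J. D j y / q^j)" for y
  have W_int: "integrable torus W"
    using D_int by (simp add: W_def[abs_def])
  have pointwise: "(avg \<epsilon> y - avg (\<epsilon>/2^J) y)\<^sup>2 \<le> W y" for y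
    using square_telescope_le_weighted[OF q, of "\<lambda>j. avg (\<epsilon>/2^j) y" J] by (simp add: W_def D_def)
  show int: "integrable torus (\<lambda>y. (avg \<epsilon> y - avg (\<epsilon>/2^J) y)\<^sup>2)"
    using pointwise order_trans[OF pointwise abs_ge_self]
    by (intro Bochner_Integration.integrable_bound[OF W_int]) auto
  have "(\<integral>y. (avg \<epsilon> y - avg (\<epsilon>/2^J) y)\<^sup>2 \<partial>torus) \<le> (\<integral>y. W y \<partial>torus)"
    by (intro integral_mono int W_int pointwise)
  also have "\<dots> = 1 / (1 - q) * (\<Sum>j<J. (\<integral>y. D j y \<partial>torus) / q^j)"
    using D_int by (simp add: W_def)
  also have "\<dots> \<le> 1 / (1 - q) * (\<Sum>j<J. K * q^j)"
    using D_L2 q by (intro mult_left_mono sum_mono) (auto simp: divide_le_eq)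
  also have "\<dots> \<le> 1 / (1 - q) * (K / (1 - q))"
  proof -
    have "0 \<le> K" using const_nonneg sq_norm_nonneg by (simp add: K_def)
    from mult_left_mono[OF less_imp_le[OF geometric_sum_less[OF q, of "{..<J}"]] this]
    have "(\<Sum>j<J. K * q^j) \<le> K / (1 - q)"
      by (simp add: sum_distrib_left)
    then show ?thesis
      using q by (intro mult_left_mono) simp_all
  qed
  finally show "(\<integral>y. (avg \<epsilon> y - avg (\<epsilon>/2^J) y)\<^sup>2 \<partial>torus)
       \<le> 4 * sqrt (2 * sq_norm) * C / (1 - q)\<^sup>2 * \<epsilon> powr (\<alpha> - 1/2)"
    by (simp add: K_def power2_eq_square)
qed

lemma avg_dyadic_limit:
  assumes e: "0 < \<epsilon>" "\<epsilon> \<le> 1"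
  shows "AE y in torus. (\<lambda>J. avg (\<epsilon>/2^J) y) \<longlonglongrightarrow> h y"
proof -
  have s: "0 < \<epsilon>/2^J" "\<epsilon>/2^J \<le> 1" for J :: nat
    using e by (auto simp: divide_le_eq order_trans[OF _ one_le_power])
  have r: "0 \<le> 2 powr (-\<alpha>)" "2 powr (-\<alpha>) < (1::real)"
    using exponent by (auto intro: powr_less_one)
  have "AE y in torus. (\<lambda>J. \<bar>avg (\<epsilon>/2^J) y - h y\<bar>) \<longlonglongrightarrow> 0"
  proof (rule AE_tendsto_zero_if_summable_nn_integral[where c = "\<lambda>J. C * \<epsilon> powr \<alpha> * (2 powr (-\<alpha>))^J"])
    fix J :: nat
    have "(\<integral>\<^sup>+y. ennreal \<bar>avg (\<epsilon>/2^J) y - h y\<bar> \<partial>torus) = ennreal (\<integral>y. \<bar>avg (\<epsilon>/2^J) y - h y\<bar> \<partial>torus)"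
      using avg_L1_approx(1)[OF s] by (intro nn_integral_eq_integral) auto
    moreover have "(\<integral>y. \<bar>avg (\<epsilon>/2^J) y - h y\<bar> \<partial>torus) \<le> C * \<epsilon> powr \<alpha> * (2 powr (-\<alpha>))^J"
      using avg_L1_approx(2)[OF s, of J] powr_divide_power2[OF e(1), of J \<alpha>] by (simp add: mult.assoc)
    ultimately show "(\<integral>\<^sup>+y. ennreal \<bar>avg (\<epsilon>/2^J) y - h y\<bar> \<partial>torus) \<le> ennreal (C * \<epsilon> powr \<alpha> * (2 powr (-\<alpha>))^J)"
      by (simp add: ennreal_leI)
  qed (use r const_nonneg in \<open>auto intro: summable_mult summable_geometric\<close>)
  then show ?thesis
    by (rule eventually_mono) (simp add: tendsto_rabs_zero_iff LIM_zero_iff)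
qed

lemma square_integrable_avg_diff:
  assumes "0 < \<epsilon>" "\<epsilon> \<le> 1"
  shows "integrable torus (\<lambda>y. (h y - avg \<epsilon> y)\<^sup>2)"
proof -
  have "(h y - avg \<epsilon> y)\<^sup>2 = (h y)\<^sup>2 - 2 * (avg \<epsilon> y * h y) + (avg \<epsilon> y)\<^sup>2" for y
    by (simp add: power2_diff mult_ac)
  moreover have "integrable torus (\<lambda>y. avg \<epsilon> y * h y)"
    using abs_avg_le[OF assms] integrable by (intro integrable_bounded_mult) auto
  ultimately show ?thesis
    using square_integrable square_integrable_avg[OF assms] by simp
qed

lemma avg_L2_approx:
  obtains K where "0 \<le> K"
    and "\<And>\<epsilon>. 0 < \<epsilon> \<Longrightarrow> \<epsilon> \<le> 1 \<Longrightarrow> (\<integral>y. (h y - avg \<epsilon> y)\<^sup>2 \<partial>torus) \<le> K * \<epsilon> powr (\<alpha> - 1/2)"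
proof
  define q where "q = 2 powr (- (\<alpha> - 1/2) / 2)"
  show K: "0 \<le> 4 * sqrt (2 * sq_norm) * C / (1 - q)\<^sup>2"
    using const_nonneg sq_norm_nonneg by simp
  fix \<epsilon> :: real assume e: "0 < \<epsilon>" "\<epsilon> \<le> 1"
  define u where "u J y = ennreal ((avg \<epsilon> y - avg (\<epsilon>/2^J) y)\<^sup>2)" for J y
  \<comment> \<open>Fatou's lemma along the dyadic scales, which converge almost everywhere.\<close>
  have "AE y in torus. liminf (\<lambda>J. u J y) = ennreal ((h y - avg \<epsilon> y)\<^sup>2)"
    using avg_dyadic_limit[OF e]
  proof (rule eventually_mono)
    fix y assume "(\<lambda>J. avg (\<epsilon>/2^J) y) \<longlonglongrightarrow> h y"
    then have "(\<lambda>J. u J y) \<longlonglongrightarrow> ennreal ((avg \<epsilon> y - h y)\<^sup>2)"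
      unfolding u_def by (intro tendsto_ennrealI tendsto_intros)
    then show "liminf (\<lambda>J. u J y) = ennreal ((h y - avg \<epsilon> y)\<^sup>2)"
      by (simp add: lim_imp_Liminf power2_commute)
  qed
  then have "(\<integral>\<^sup>+y. ennreal ((h y - avg \<epsilon> y)\<^sup>2) \<partial>torus) = (\<integral>\<^sup>+y. liminf (\<lambda>J. u J y) \<partial>torus)"
    by (intro nn_integral_cong_AE) (auto elim: eventually_mono)
  also have "\<dots> \<le> liminf (\<lambda>J. \<integral>\<^sup>+y. u J y \<partial>torus)"
    by (rule nn_integral_liminf) (simp add: u_def)
  also have "\<dots> \<le> ennreal (4 * sqrt (2 * sq_norm) * C / (1 - q)\<^sup>2 * \<epsilon> powr (\<alpha> - 1/2))"
  proof (rule Liminf_le[OF sequentially_bot always_eventually, OF allI])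
    fix J
    show "(\<integral>\<^sup>+y. u J y \<partial>torus) \<le> ennreal (4 * sqrt (2 * sq_norm) * C / (1 - q)\<^sup>2 * \<epsilon> powr (\<alpha> - 1/2))"
      using avg_dyadic_L2[OF e, of J] unfolding u_def q_def
      by (simp add: nn_integral_eq_integral ennreal_leI)
  qed
  finally have "(\<integral>\<^sup>+y. ennreal ((h y - avg \<epsilon> y)\<^sup>2) \<partial>torus)
      \<le> ennreal (4 * sqrt (2 * sq_norm) * C / (1 - q)\<^sup>2 * \<epsilon> powr (\<alpha> - 1/2))" .
  then show "(\<integral>y. (h y - avg \<epsilon> y)\<^sup>2 \<partial>torus) \<le> 4 * sqrt (2 * sq_norm) * C / (1 - q)\<^sup>2 * \<epsilon> powr (\<alpha> - 1/2)"
    by (rule nn_integral_le_imp_integral_le(2)[rotated 2]) (use const_nonneg sq_norm_nonneg in auto)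
qed

lemma correlation_le_smoothing:
  fixes a b :: nat
  assumes mean0: "(\<integral>x. h x \<partial>torus) = 0" and e: "0 < \<epsilon>" "\<epsilon> \<le> 1" and ab: "0 < a" "a \<le> b"
  shows "\<bar>\<integral>\<xi>. h (real a * \<xi>) * h (real b * \<xi>) \<partial>torus\<bar>
    \<le> 2 * sqrt (sq_norm * (real a / real b)) / \<epsilon> * (\<integral>x. \<bar>h x\<bar> \<partial>torus)
      + sqrt (sq_norm / \<epsilon>) * (C * \<epsilon> powr \<alpha>) + (\<integral>y. (h y - avg \<epsilon> y)\<^sup>2 \<partial>torus)"
proof -
  define u where "u = avg \<epsilon>"
  define v where "v y = h y - u y" for y
  have [measurable]: "u \<in> borel_measurable borel" "v \<in> borel_measurable borel"
    by (simp_all add: u_def v_def[abs_def])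
  have per: "periodic1 u" "periodic1 v"
    using periodic periodic_avg by (simp_all add: u_def v_def periodic1_def)
  have u_bound: "\<bar>u y\<bar> \<le> sqrt (sq_norm / \<epsilon>)" for y
    unfolding u_def by (rule abs_avg_le[OF e])
  have v_int: "integrable torus v"
    using integrable integrable_avg[OF e] by (simp add: u_def v_def[abs_def])
  have sq: "integrable torus (\<lambda>x. (u x)\<^sup>2)" "integrable torus (\<lambda>x. (v x)\<^sup>2)"
    using square_integrable_avg[OF e] square_integrable_avg_diff[OF e] by (simp_all add: u_def v_def)
  have split: "h (real a * \<xi>) * h (real b * \<xi>) = u (real a * \<xi>) * h (real b * \<xi>)
      + v (real a * \<xi>) * u (real b * \<xi>) + v (real a * \<xi>) * v (real b * \<xi>)" for \<xi>
    by (simp add: v_def algebra_simps)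
  have "\<bar>\<integral>\<xi>. u (real a * \<xi>) * h (real b * \<xi>) \<partial>torus\<bar>
      \<le> 2 * sqrt (sq_norm * (real a / real b)) / \<epsilon> * (\<integral>x. \<bar>h x\<bar> \<partial>torus)"
  proof (rule correlation_le_oscillation[OF _ _ per(1) periodic integrable mean0 u_bound])
    fix y r :: real assume r: "0 \<le> r" "r \<le> real a / real b"
    moreover have "real a / real b \<le> 1" using ab by simp
    ultimately have "\<bar>u (y + r) - u y\<bar> \<le> 2 * sqrt (sq_norm * r) / \<epsilon>"
      unfolding u_def by (intro abs_avg_shift_le e) auto
    also have "\<dots> \<le> 2 * sqrt (sq_norm * (real a / real b)) / \<epsilon>"
      using r e sq_norm_nonneg by (intro divide_right_mono mult_left_mono real_sqrt_le_mono) auto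
    finally show "\<bar>u (y + r) - u y\<bar> \<le> 2 * sqrt (sq_norm * (real a / real b)) / \<epsilon>" .
  qed (use ab in auto)
  moreover have "\<bar>\<integral>\<xi>. v (real a * \<xi>) * u (real b * \<xi>) \<partial>torus\<bar> \<le> sqrt (sq_norm / \<epsilon>) * (C * \<epsilon> powr \<alpha>)"
  proof -
    have "\<bar>\<integral>\<xi>. v (real a * \<xi>) * u (real b * \<xi>) \<partial>torus\<bar> \<le> sqrt (sq_norm / \<epsilon>) * (\<integral>x. \<bar>v x\<bar> \<partial>torus)"
      by (rule correlation_le_sup_L1[of v u]) (use per(2) v_int u_bound ab in auto)
    also have "\<dots> \<le> sqrt (sq_norm / \<epsilon>) * (C * \<epsilon> powr \<alpha>)"
      using avg_L1_approx(2)[OF e] e sq_norm_nonneg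
      by (intro mult_left_mono) (simp_all add: u_def v_def abs_minus_commute)
    finally show ?thesis .
  qed
  moreover have "\<bar>\<integral>\<xi>. v (real a * \<xi>) * v (real b * \<xi>) \<partial>torus\<bar> \<le> (\<integral>y. (h y - avg \<epsilon> y)\<^sup>2 \<partial>torus)"
    using correlation_le_L2[OF _ per(2) sq(2), where a = a and b = b] ab by (simp add: u_def v_def)
  moreover have "integrable torus (\<lambda>\<xi>. u (real a * \<xi>) * h (real b * \<xi>))"
    "integrable torus (\<lambda>\<xi>. v (real a * \<xi>) * u (real b * \<xi>))"
    "integrable torus (\<lambda>\<xi>. v (real a * \<xi>) * v (real b * \<xi>))"
    using ab integrable_dilates_mult[OF _ _ per(1) periodic sq(1) square_integrable]
      integrable_dilates_mult[OF _ _ per(2) per(1) sq(2) sq(1)]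
      integrable_dilates_mult[OF _ _ per(2) per(2) sq(2) sq(2)]
    by simp_all
  ultimately show ?thesis
    unfolding split by simp
qed

lemma correlation_le:
  assumes mean0: "(\<integral>x. h x \<partial>torus) = 0"
  obtains K \<kappa> where "0 < \<kappa>" "0 \<le> K"
    "\<And>a b. 0 < a \<Longrightarrow> a \<le> b \<Longrightarrow>
      \<bar>\<integral>\<xi>. h (real a * \<xi>) * h (real b * \<xi>) \<partial>torus\<bar> \<le> K * (real a / real b) powr \<kappa>"
proof -
  obtain K2 where K2: "0 \<le> K2"
    "\<And>\<epsilon>. 0 < \<epsilon> \<Longrightarrow> \<epsilon> \<le> 1 \<Longrightarrow> (\<integral>y. (h y - avg \<epsilon> y)\<^sup>2 \<partial>torus) \<le> K2 * \<epsilon> powr (\<alpha> - 1/2)"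
    using avg_L2_approx by blast
  define L where "L = (\<integral>x. \<bar>h x\<bar> \<partial>torus)"
  define \<kappa> where "\<kappa> = min 1 (\<alpha> - 1/2) / 4"
  define K where "K = 2 * sqrt sq_norm * L + sqrt sq_norm * C + K2"
  have L: "0 \<le> L" by (simp add: L_def)
  have \<kappa>: "0 < \<kappa>" using exponent by (simp add: \<kappa>_def)
  have "\<bar>\<integral>\<xi>. h (real a * \<xi>) * h (real b * \<xi>) \<partial>torus\<bar> \<le> K * (real a / real b) powr \<kappa>"
    if ab: "0 < a" "a \<le> b" for a b :: nat
  proof -
    define \<delta> where "\<delta> = real a / real b"
    have \<delta>: "0 < \<delta>" "\<delta> \<le> 1" using ab by (auto simp: \<delta>_def)
    \<comment> \<open>With this scale all three terms become positive powers of \<delta>.\<close>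
    define \<epsilon> where "\<epsilon> = \<delta> powr (1/4)"
    have e: "0 < \<epsilon>" "\<epsilon> \<le> 1" using \<delta> by (auto simp: \<epsilon>_def powr_le1)
    have "\<delta> powr (1/2) / \<delta> powr (1/4) = \<delta> powr (1/4)"
      by (simp add: powr_diff[symmetric])
    then have eq1: "2 * sqrt (sq_norm * \<delta>) / \<epsilon> * L = 2 * sqrt sq_norm * L * \<delta> powr (1/4)"
      using \<delta> by (simp add: \<epsilon>_def real_sqrt_mult powr_half_sqrt[symmetric] field_simps)
    have eq2: "sqrt (sq_norm / \<epsilon>) * (C * \<epsilon> powr \<alpha>) = sqrt sq_norm * C * \<epsilon> powr (\<alpha> - 1/2)"
      using e by (simp add: real_sqrt_divide powr_diff powr_half_sqrt[symmetric])
    have eq3: "\<epsilon> powr (\<alpha> - 1/2) = \<delta> powr ((\<alpha> - 1/2) / 4)"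
      using \<delta> by (simp add: \<epsilon>_def powr_powr)
    have "\<delta> powr (1/4) \<le> \<delta> powr \<kappa>" "\<delta> powr ((\<alpha> - 1/2) / 4) \<le> \<delta> powr \<kappa>"
      using \<delta> by (auto simp: \<kappa>_def intro!: powr_mono')
    then have "2 * sqrt (sq_norm * \<delta>) / \<epsilon> * L + sqrt (sq_norm / \<epsilon>) * (C * \<epsilon> powr \<alpha>)
        + K2 * \<epsilon> powr (\<alpha> - 1/2) \<le> 2 * sqrt sq_norm * L * \<delta> powr \<kappa> + (sqrt sq_norm * C + K2) * \<delta> powr \<kappa>"
      unfolding eq1 eq2 eq3 distrib_right add.assoc using L K2(1) const_nonneg sq_norm_nonneg
      by (intro add_mono mult_left_mono) auto
    also have "\<dots> = K * \<delta> powr \<kappa>"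
      by (simp add: K_def algebra_simps)
    finally have "2 * sqrt (sq_norm * \<delta>) / \<epsilon> * L + sqrt (sq_norm / \<epsilon>) * (C * \<epsilon> powr \<alpha>)
        + K2 * \<epsilon> powr (\<alpha> - 1/2) \<le> K * \<delta> powr \<kappa>" .
    then show ?thesis
      using correlation_le_smoothing[OF mean0 e ab] K2(2)[OF e] by (simp add: \<delta>_def L_def)
  qed
  moreover have "0 \<le> K"
    using L K2(1) const_nonneg sq_norm_nonneg by (simp add: K_def)
  ultimately show thesis
    using \<kappa> that by blast
qed

lemma variance_lacunary_le:
  assumes mean0: "(\<integral>x. h x \<partial>torus) = 0" and lac: "lacunary q a"
  obtains K where "\<And>N. integrable torus (\<lambda>\<xi>. (\<Sum>n=1..N. h (real (a n) * \<xi>))\<^sup>2)"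
    "\<And>N. (\<integral>\<xi>. (\<Sum>n=1..N. h (real (a n) * \<xi>))\<^sup>2 \<partial>torus) \<le> K * real N"
proof -
  obtain K \<kappa> where \<kappa>: "0 < \<kappa>" and K: "0 \<le> K"
    and corr: "\<And>a b. 0 < a \<Longrightarrow> a \<le> b \<Longrightarrow>
      \<bar>\<integral>\<xi>. h (real a * \<xi>) * h (real b * \<xi>) \<partial>torus\<bar> \<le> K * (real a / real b) powr \<kappa>"
    by (rule correlation_le[OF mean0]) blast
  have q: "1 < q" using lac by (simp add: lacunary_def)
  define r where "r = q powr (- \<kappa>)"
  have r: "0 < r" "r < 1" using q \<kappa> by (auto simp: r_def intro!: powr_less_one)
  have sq: "integrable torus (\<lambda>\<xi>. (h (real (a n) * \<xi>))\<^sup>2)" if "1 \<le> n" for n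
    using integrable_torus_dilate_iff[of "\<lambda>x. (h x)\<^sup>2" "a n"] square_integrable periodic
      lacunary_pos[OF lac that] by (simp add: periodic1_def)
  have corr_r: "\<bar>\<integral>\<xi>. h (real (a m) * \<xi>) * h (real (a n) * \<xi>) \<partial>torus\<bar> \<le> K * r ^ (n - m)"
    if "1 \<le> m" "m \<le> n" for m n
  proof -
    have "(real (a m) / real (a n)) powr \<kappa> \<le> ((1 / q) ^ (n - m)) powr \<kappa>"
      using lacunary_ratio_le[OF lac that] \<kappa> by (intro powr_mono2) auto
    also have "\<dots> = r ^ (n - m)"
      using q by (simp add: r_def powr_realpow[symmetric] powr_powr powr_minus_divide powr_divide mult.commute)
    finally show ?thesis
      using order_trans[OF corr[OF lacunary_pos[OF lac that(1)] lacunary_mono[OF lac that]]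
          mult_left_mono[OF _ K]] by blast
  qed
  show thesis
    by (rule that[OF integral_square_sum_le(1,2)[where f = "\<lambda>n \<xi>. h (real (a n) * \<xi>)", OF _ sq corr_r r K]])
      simp_all
qed

lemma AE_lacunary_geom_averages_tendsto_zero:
  assumes mean0: "(\<integral>x. h x \<partial>torus) = 0" and lac: "lacunary q a" and \<rho>: "1 < \<rho>"
  shows "AE \<xi> in torus. (\<lambda>j. (\<Sum>n=1..geom_seq \<rho> j. h (real (a n) * \<xi>)) / real (geom_seq \<rho> j)) \<longlonglongrightarrow> 0"
proof -
  obtain K where "\<And>N. integrable torus (\<lambda>\<xi>. (\<Sum>n=1..N. h (real (a n) * \<xi>))\<^sup>2)"
    "\<And>N. (\<integral>\<xi>. (\<Sum>n=1..N. h (real (a n) * \<xi>))\<^sup>2 \<partial>torus) \<le> K * real N"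
    by (rule variance_lacunary_le[OF mean0 lac]) blast
  then show ?thesis
    by (intro AE_geom_seq_average_tendsto_zero[OF _ _ _ \<rho>]) auto
qed

lemma L1_hoelder_dominated:
  assumes [measurable]: "g \<in> borel_measurable borel" and "periodic1 g"
    and "\<And>x. \<bar>g x\<bar> \<le> \<bar>h x\<bar>" and "\<And>x y. \<bar>g x - g y\<bar> \<le> \<bar>h x - h y\<bar>"
  shows "L1_hoelder g C \<alpha>"
proof
  show "integrable torus (\<lambda>x. (g x)\<^sup>2)"
  proof (rule Bochner_Integration.integrable_bound[OF square_integrable])
    show "AE x in torus. norm ((g x)\<^sup>2) \<le> norm ((h x)\<^sup>2)"
      using assms(3) by (simp add: abs_le_square_iff)
  qed simp
  fix \<delta> :: real assume \<delta>: "0 < \<delta>" "\<delta> \<le> 1"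
  have "integrable torus (\<lambda>x. h (x + \<delta>))"
    using integrable_torus_shift_iff[OF measurable periodic] integrable by simp
  then have "(\<integral>x. \<bar>g (x + \<delta>) - g x\<bar> \<partial>torus) \<le> (\<integral>x. \<bar>h (x + \<delta>) - h x\<bar> \<partial>torus)"
    using integrable assms(4) by (intro integral_mono') auto
  also have "\<dots> \<le> C * \<delta> powr \<alpha>"
    by (rule L1_modulus_le[OF \<delta>])
  finally show "(\<integral>x. \<bar>g (x + \<delta>) - g x\<bar> \<partial>torus) \<le> C * \<delta> powr \<alpha>" .
qed (use assms exponent const_nonneg in auto)

lemma L1_hoelder_diff_const: "L1_hoelder (\<lambda>x. h x - c) C \<alpha>"
proof
  have "(h x - c)\<^sup>2 = (h x)\<^sup>2 - 2 * c * h x + c\<^sup>2" for x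
    by (simp add: power2_diff mult_ac)
  then show "integrable torus (\<lambda>x. (h x - c)\<^sup>2)"
    using square_integrable integrable by simp
qed (use periodic L1_modulus_le exponent const_nonneg in \<open>auto simp: periodic1_def\<close>)

lemma AE_lacunary_geom_averages_tendsto:
  assumes lac: "lacunary q a" and \<rho>: "1 < \<rho>"
  shows "AE \<xi> in torus.
    (\<lambda>j. (\<Sum>n=1..geom_seq \<rho> j. h (real (a n) * \<xi>)) / real (geom_seq \<rho> j)) \<longlonglongrightarrow> (\<integral>x. h x \<partial>torus)"
proof -
  define \<mu> where "\<mu> = (\<integral>x. h x \<partial>torus)"
  interpret centered: L1_hoelder "\<lambda>x. h x - \<mu>" C \<alpha>
    by (rule L1_hoelder_diff_const)
  have "(\<integral>x. h x - \<mu> \<partial>torus) = 0"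
    using integrable by (simp add: \<mu>_def)
  from centered.AE_lacunary_geom_averages_tendsto_zero[OF this lac \<rho>] show ?thesis
    unfolding \<mu>_def[symmetric]
  proof (rule eventually_mono)
    fix \<xi> assume "(\<lambda>j. (\<Sum>n=1..geom_seq \<rho> j. h (real (a n) * \<xi>) - \<mu>) / real (geom_seq \<rho> j)) \<longlonglongrightarrow> 0"
    then have "(\<lambda>j. (\<Sum>n=1..geom_seq \<rho> j. h (real (a n) * \<xi>) - \<mu>) / real (geom_seq \<rho> j) + \<mu>) \<longlonglongrightarrow> 0 + \<mu>"
      by (intro tendsto_add tendsto_const)
    moreover have "(\<Sum>n=1..geom_seq \<rho> j. h (real (a n) * \<xi>) - \<mu>) / real (geom_seq \<rho> j) + \<mu>
        = (\<Sum>n=1..geom_seq \<rho> j. h (real (a n) * \<xi>)) / real (geom_seq \<rho> j)" for j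
      using geom_seq_bounds(1)[of \<rho> j] \<rho> by (simp add: sum_subtractf field_simps)
    ultimately show "(\<lambda>j. (\<Sum>n=1..geom_seq \<rho> j. h (real (a n) * \<xi>)) / real (geom_seq \<rho> j)) \<longlonglongrightarrow> \<mu>"
      by simp
  qed
qed

lemma AE_lacunary_averages_tendsto_nonneg:
  assumes nonneg: "\<And>x. 0 \<le> h x" and lac: "lacunary q a"
  shows "AE \<xi> in torus. (\<lambda>N. (\<Sum>n=1..N. h (real (a n) * \<xi>)) / real N) \<longlonglongrightarrow> (\<integral>x. h x \<partial>torus)"
proof -
  \<comment> \<open>Countably many ratios suffice: the rational ones.\<close>
  have "AE \<xi> in torus. \<forall>r::rat. 1 < real_of_rat r \<longrightarrow>
      (\<lambda>j. (\<Sum>n=1..geom_seq (real_of_rat r) j. h (real (a n) * \<xi>)) / real (geom_seq (real_of_rat r) j))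
        \<longlonglongrightarrow> (\<integral>x. h x \<partial>torus)"
    unfolding AE_all_countable using AE_lacunary_geom_averages_tendsto[OF lac] by simp
  then show ?thesis
  proof (rule eventually_mono)
    fix \<xi> assume lim: "\<forall>r::rat. 1 < real_of_rat r \<longrightarrow>
      (\<lambda>j. (\<Sum>n=1..geom_seq (real_of_rat r) j. h (real (a n) * \<xi>)) / real (geom_seq (real_of_rat r) j))
        \<longlonglongrightarrow> (\<integral>x. h x \<partial>torus)"
    show "(\<lambda>N. (\<Sum>n=1..N. h (real (a n) * \<xi>)) / real N) \<longlonglongrightarrow> (\<integral>x. h x \<partial>torus)"
    proof (rule cesaro_from_geom_seq)
      fix \<rho> :: real assume "\<rho> \<in> \<rat>" "1 < \<rho>"
      then show "(\<lambda>j. (\<Sum>n=1..geom_seq \<rho> j. h (real (a n) * \<xi>)) / real (geom_seq \<rho> j)) \<longlonglongrightarrow> (\<integral>x. h x \<partial>torus)"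
        using lim by (auto elim: Rats_cases)
    qed (rule nonneg)
  qed
qed

lemma AE_lacunary_averages_tendsto:
  assumes lac: "lacunary q a"
  shows "AE \<xi> in torus. (\<lambda>N. (\<Sum>n=1..N. h (real (a n) * \<xi>)) / real N) \<longlonglongrightarrow> (\<integral>x. h x \<partial>torus)"
proof -
  \<comment> \<open>Split into positive and negative parts, to which the monotonicity argument applies.\<close>
  interpret pos: L1_hoelder "\<lambda>x. max (h x) 0" C \<alpha>
    using periodic by (intro L1_hoelder_dominated) (auto simp: periodic1_def)
  interpret neg: L1_hoelder "\<lambda>x. max (- h x) 0" C \<alpha>
    using periodic by (intro L1_hoelder_dominated) (auto simp: periodic1_def)
  have split: "h x = max (h x) 0 - max (- h x) 0" for x
    by simp
  have integral_split: "(\<integral>x. h x \<partial>torus) = (\<integral>x. max (h x) 0 \<partial>torus) - (\<integral>x. max (- h x) 0 \<partial>torus)"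
    using pos.integrable neg.integrable by (subst split) simp
  have average_split: "(\<Sum>n=1..N. h (real (a n) * \<xi>)) / real N
      = (\<Sum>n=1..N. max (h (real (a n) * \<xi>)) 0) / real N - (\<Sum>n=1..N. max (- h (real (a n) * \<xi>)) 0) / real N"
    for N \<xi> by (subst split) (simp add: sum_subtractf diff_divide_distrib)
  show ?thesis
    using pos.AE_lacunary_averages_tendsto_nonneg[OF max.cobounded2 lac]
      neg.AE_lacunary_averages_tendsto_nonneg[OF max.cobounded2 lac]
    unfolding integral_split average_split by eventually_elim (rule tendsto_diff)
qed

end

section \<open>From the torus to Lebesgue measure on the line\<close>

lemma AE_lborel_affine:
  fixes R :: "real \<Rightarrow> bool"
  assumes "c \<noteq> 0" and "AE y in lborel. R y"
  shows "AE x in lborel. R (t + c * x)"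
proof -
  obtain N where N: "N \<in> null_sets lborel" "{y. \<not> R y} \<subseteq> N"
    using assms(2) by (auto simp: eventually_ae_filter)
  then have [measurable]: "N \<in> sets borel" by auto
  have "AE y in lborel. y \<notin> N"
    using N(1) by (rule AE_not_in)
  moreover have "Measurable.pred borel (\<lambda>y. y \<notin> N)"
    by measurable
  ultimately have "AE x in lborel. t + c * x \<notin> N"
    using AE_borel_affine[OF assms(1), of "\<lambda>y. y \<notin> N" t] by simp
  then show ?thesis
    using N(2) by (auto elim: eventually_mono)
qed

lemma AE_torus_imp_AE_lborel:
  assumes ae: "AE x in torus. Q x" and inv: "\<And>x k. Q (x + of_int k) = Q x"
  shows "AE x in lborel. Q x"
proof -
  have "AE x in lborel. 0 \<le> x \<and> x < 1 \<longrightarrow> Q x"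
    using ae by (simp add: AE_torus_iff)
  then have "AE x in lborel. 0 \<le> of_int k + 1 * x \<and> of_int k + 1 * x < 1 \<longrightarrow> Q (of_int k + 1 * x)"
    for k :: int by (rule AE_lborel_affine[rotated]) simp
  then have "AE x in lborel. \<forall>k::int. 0 \<le> of_int k + x \<and> of_int k + x < 1 \<longrightarrow> Q (of_int k + x)"
    by (simp add: AE_all_countable)
  then show ?thesis
  proof (rule eventually_mono)
    fix x assume "\<forall>k::int. 0 \<le> of_int k + x \<and> of_int k + x < 1 \<longrightarrow> Q (of_int k + x)"
    moreover have "0 \<le> of_int (- \<lfloor>x\<rfloor>) + x \<and> of_int (- \<lfloor>x\<rfloor>) + x < 1"
      by linarith
    ultimately have "Q (of_int (- \<lfloor>x\<rfloor>) + x)"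
      by blast
    then show "Q x"
      using inv[of x "- \<lfloor>x\<rfloor>"] by (simp add: add.commute)
  qed
qed

lemma periodic_borel_representative:
  fixes f :: "real \<Rightarrow> complex"
  assumes per: "periodic1 f" and [measurable]: "f \<in> borel_measurable lebesgue"
  obtains G where "G \<in> borel_measurable borel" "periodic1 G" "AE x in lborel. f x = G x"
proof -
  obtain gr where [measurable]: "gr \<in> borel_measurable borel" and gr: "AE x in lborel. Re (f x) = gr x"
    using completion_ex_borel_measurable_real[of "\<lambda>x. Re (f x)" lborel] by auto
  obtain gi where [measurable]: "gi \<in> borel_measurable borel" and gi: "AE x in lborel. Im (f x) = gi x"
    using completion_ex_borel_measurable_real[of "\<lambda>x. Im (f x)" lborel] by auto
  \<comment> \<open>Periodize a Borel version of f by reading it off on the fundamental domain [0,1).\<close>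
  define G where "G x = complex_of_real (gr (frac x)) + \<i> * complex_of_real (gi (frac x))" for x
  have [measurable]: "G \<in> borel_measurable borel"
    unfolding G_def[abs_def] frac_def by measurable
  have G_per: "G (x + of_int k) = G x" for x k
    by (simp add: G_def)
  have "AE x in torus. f x = G x"
    unfolding AE_torus_iff using gr gi
    by eventually_elim (auto simp: G_def frac_eq complex_eq_iff)
  then have "AE x in lborel. f x = G x"
    by (rule AE_torus_imp_AE_lborel) (simp add: G_per periodic1_add_of_int[OF per])
  moreover have "periodic1 G"
    using G_per[of _ 1] by (simp add: periodic1_def)
  ultimately show thesis
    by (intro that) simp_all
qed

lemma set_integral_unit_interval_AE_eq_torus:
  fixes u v :: "real \<Rightarrow> 'b::{banach, second_countable_topology}"
  assumes [measurable]: "u \<in> borel_measurable lebesgue" "v \<in> borel_measurable borel"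
    and ae: "AE x in lborel. u x = v x"
  shows "set_integrable lebesgue {0..1} u \<longleftrightarrow> integrable torus v"
    "(LINT x:{0..1}|lebesgue. u x) = (\<integral>x. v x \<partial>torus)"
proof -
  define w where "w x = indicator {0..<1} x *\<^sub>R v x" for x
  have [measurable]: "w \<in> borel_measurable borel"
    unfolding w_def[abs_def] by measurable
  have "(\<lambda>x::real. indicator {0..1} x :: real) \<in> borel_measurable lebesgue"
    by (rule measurable_completion, rule borel_measurable_indicator) simp
  then have u_meas: "(\<lambda>x. indicator {0..1} x *\<^sub>R u x) \<in> borel_measurable lebesgue"
    using assms(1) by (rule borel_measurable_scaleR)
  have w_meas: "w \<in> borel_measurable lebesgue"
    by (rule measurable_completion) simp
  have ae': "AE x in lebesgue. indicator {0..1} x *\<^sub>R u x = w x"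
    using AE_completion[OF ae] AE_completion[OF AE_lborel_singleton[of 1]]
    by eventually_elim (auto simp: indicator_def w_def)
  show "set_integrable lebesgue {0..1} u \<longleftrightarrow> integrable torus v"
    unfolding set_integrable_def integrable_cong_AE[OF u_meas w_meas ae']
    by (simp add: integrable_completion integrable_torus_iff w_def[abs_def])
  show "(LINT x:{0..1}|lebesgue. u x) = (\<integral>x. v x \<partial>torus)"
    unfolding set_lebesgue_integral_def integral_cong_AE[OF u_meas w_meas ae']
    by (simp add: integral_completion integral_torus w_def[abs_def])
qed

lemma in_L2_torus_representative:
  assumes "in_L2_torus f"
  obtains G where "G \<in> borel_measurable borel" "periodic1 G" "integrable torus (\<lambda>x. (cmod (G x))\<^sup>2)"
    "AE x in lborel. f x = G x" "(LINT x:{0..1}|lebesgue. f x) = (\<integral>x. G x \<partial>torus)"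
    "\<And>\<delta>. L1_modulus f \<delta> = (\<integral>x. cmod (G (x + \<delta>) - G x) \<partial>torus)"
proof -
  have per: "periodic1 f" and f_meas [measurable]: "f \<in> borel_measurable lebesgue"
    and sq: "set_integrable lebesgue {0..1} (\<lambda>x. (cmod (f x))\<^sup>2)"
    using assms by (auto simp: in_L2_torus_def)
  obtain G where G_meas [measurable]: "G \<in> borel_measurable borel" and G_per: "periodic1 G"
    and ae: "AE x in lborel. f x = G x"
    using periodic_borel_representative[OF per f_meas] by blast
  have "AE x in lborel. (cmod (f x))\<^sup>2 = (cmod (G x))\<^sup>2"
    using ae by (auto elim: eventually_mono)
  then have "set_integrable lebesgue {0..1} (\<lambda>x. (cmod (f x))\<^sup>2) \<longleftrightarrow> integrable torus (\<lambda>x. (cmod (G x))\<^sup>2)"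
    by (intro set_integral_unit_interval_AE_eq_torus(1)) auto
  with sq have "integrable torus (\<lambda>x. (cmod (G x))\<^sup>2)"
    by blast
  moreover have "(LINT x:{0..1}|lebesgue. f x) = (\<integral>x. G x \<partial>torus)"
    using ae by (intro set_integral_unit_interval_AE_eq_torus(2)) auto
  moreover have "L1_modulus f \<delta> = (\<integral>x. cmod (G (x + \<delta>) - G x) \<partial>torus)" for \<delta>
  proof -
    have "(\<lambda>x. f (x + \<delta>)) \<in> borel_measurable lebesgue"
      using measurable_compose[OF lebesgue_affine_measurable[where c = "\<lambda>_. 1" and t = \<delta>] f_meas]
      by (simp add: add.commute)
    moreover have "AE x in lborel. f (\<delta> + 1 * x) = G (\<delta> + 1 * x)"
      using ae by (rule AE_lborel_affine[rotated]) simp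
    ultimately show ?thesis
      unfolding L1_modulus_def using ae
      by (intro set_integral_unit_interval_AE_eq_torus(2)) (auto simp: add.commute elim: eventually_elim2)
  qed
  ultimately show thesis
    using that[OF G_meas G_per _ ae] by blast
qed

lemma integrable_torus_complex:
  fixes G :: "real \<Rightarrow> complex"
  assumes [measurable]: "G \<in> borel_measurable borel" and "integrable torus (\<lambda>x. (cmod (G x))\<^sup>2)"
  shows "integrable torus G"
proof -
  have "integrable torus (\<lambda>x. cmod (G x))"
    by (rule torus.square_integrable_imp_integrable) (measurable, rule assms(2))
  then show ?thesis
    by (simp add: integrable_norm_iff)
qed

lemma torus_L1_modulus_le:
  fixes G :: "real \<Rightarrow> complex"
  assumes [measurable]: "G \<in> borel_measurable borel" and per: "periodic1 G" and int: "integrable torus G"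
  shows "integrable torus (\<lambda>x. cmod (G (x + \<delta>) - G x))"
    "(\<integral>x. cmod (G (x + \<delta>) - G x) \<partial>torus) \<le> 2 * (\<integral>x. cmod (G x) \<partial>torus)"
proof -
  have shift: "integrable torus (\<lambda>x. cmod (G (x + \<delta>)))" "(\<integral>x. cmod (G (x + \<delta>)) \<partial>torus) = (\<integral>x. cmod (G x) \<partial>torus)"
    using integrable_torus_shift_iff[of "\<lambda>x. cmod (G x)" \<delta>] integral_torus_shift[of "\<lambda>x. cmod (G x)" \<delta>] per int
    by (simp_all add: periodic1_def)
  then show "integrable torus (\<lambda>x. cmod (G (x + \<delta>) - G x))"
    using int by (simp add: integrable_norm_iff)
  have "(\<integral>x. cmod (G (x + \<delta>) - G x) \<partial>torus) \<le> (\<integral>x. cmod (G (x + \<delta>)) + cmod (G x) \<partial>torus)"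
    using shift int by (intro integral_mono') (auto simp: norm_triangle_ineq4)
  then show "(\<integral>x. cmod (G (x + \<delta>) - G x) \<partial>torus) \<le> 2 * (\<integral>x. cmod (G x) \<partial>torus)"
    using shift int by simp
qed

lemma powr_bound_if_bigo_at_right:
  fixes \<phi> :: "real \<Rightarrow> real"
  assumes bigo: "\<phi> \<in> O[at_right 0](\<lambda>\<delta>. \<delta> powr \<alpha>)" and "0 \<le> \<alpha>"
    and bounded: "\<And>\<delta>. 0 < \<delta> \<Longrightarrow> \<delta> \<le> 1 \<Longrightarrow> \<phi> \<delta> \<le> M"
  obtains C where "0 \<le> C" "\<And>\<delta>. 0 < \<delta> \<Longrightarrow> \<delta> \<le> 1 \<Longrightarrow> \<phi> \<delta> \<le> C * \<delta> powr \<alpha>"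
proof -
  obtain c where c: "0 < c" and "\<forall>\<^sub>F \<delta> in at_right 0. norm (\<phi> \<delta>) \<le> c * norm (\<delta> powr \<alpha>)"
    using bigo by (elim landau_o.bigE)
  then obtain d where d: "0 < d" and near: "\<And>\<delta>. 0 < \<delta> \<Longrightarrow> \<delta> < d \<Longrightarrow> \<phi> \<delta> \<le> c * \<delta> powr \<alpha>"
    unfolding eventually_at_right[OF zero_less_one] by (auto simp: abs_le_iff)
  define C where "C = c + max M 0 / d powr \<alpha>"
  show thesis
  proof (rule that)
    show "0 \<le> C" using c d by (simp add: C_def)
    fix \<delta> :: real assume \<delta>: "0 < \<delta>" "\<delta> \<le> 1"
    show "\<phi> \<delta> \<le> C * \<delta> powr \<alpha>"
    proof (cases "\<delta> < d")
      case True
      have "c * \<delta> powr \<alpha> \<le> C * \<delta> powr \<alpha>"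
        using d by (intro mult_right_mono) (simp_all add: C_def)
      then show ?thesis
        using near[OF \<delta>(1) True] by linarith
    next
      case False
      \<comment> \<open>Away from 0 the bound by M takes over, since (\<delta> / d) powr \<alpha> \<ge> 1.\<close>
      then have "1 \<le> \<delta> powr \<alpha> / d powr \<alpha>"
        using d \<open>0 \<le> \<alpha>\<close> ge_one_powr_ge_zero[of "\<delta> / d" \<alpha>] by (simp add: powr_divide)
      then have "max M 0 * 1 \<le> max M 0 * (\<delta> powr \<alpha> / d powr \<alpha>)"
        by (intro mult_left_mono) simp_all
      also have "\<dots> = max M 0 / d powr \<alpha> * \<delta> powr \<alpha>"
        by simp
      also have "\<dots> \<le> C * \<delta> powr \<alpha>"
        using c by (intro mult_right_mono) (simp_all add: C_def)
      finally show ?thesis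
        using bounded[OF \<delta>] by linarith
    qed
  qed
qed

lemma L1_modulus_powr_bound:
  assumes f: "in_L2_torus f" and bigo: "L1_modulus f \<in> O[at_right 0](\<lambda>\<delta>. \<delta> powr \<alpha>)" and "0 \<le> \<alpha>"
  obtains C where "0 \<le> C" "\<And>\<delta>. 0 < \<delta> \<Longrightarrow> \<delta> \<le> 1 \<Longrightarrow> L1_modulus f \<delta> \<le> C * \<delta> powr \<alpha>"
proof -
  obtain G where [measurable]: "G \<in> borel_measurable borel" and G: "periodic1 G"
    "integrable torus (\<lambda>x. (cmod (G x))\<^sup>2)"
    and modulus: "\<And>\<delta>. L1_modulus f \<delta> = (\<integral>x. cmod (G (x + \<delta>) - G x) \<partial>torus)"
    by (rule in_L2_torus_representative[OF f]) blast
  have "L1_modulus f \<delta> \<le> 2 * (\<integral>x. cmod (G x) \<partial>torus)" for \<delta>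
    unfolding modulus using G by (intro torus_L1_modulus_le(2) integrable_torus_complex) simp_all
  then show thesis
    using powr_bound_if_bigo_at_right[OF bigo \<open>0 \<le> \<alpha>\<close>] that by blast
qed

lemma L1_hoelder_Re_Im:
  fixes G :: "real \<Rightarrow> complex"
  assumes [measurable]: "G \<in> borel_measurable borel" and per: "periodic1 G"
    and sq: "integrable torus (\<lambda>x. (cmod (G x))\<^sup>2)" and "1/2 < \<alpha>" "0 \<le> C"
    and modulus: "\<And>\<delta>. 0 < \<delta> \<Longrightarrow> \<delta> \<le> 1 \<Longrightarrow> (\<integral>x. cmod (G (x + \<delta>) - G x) \<partial>torus) \<le> C * \<delta> powr \<alpha>"
  shows "L1_hoelder (\<lambda>x. Re (G x)) C \<alpha>" "L1_hoelder (\<lambda>x. Im (G x)) C \<alpha>"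
proof -
  have part: "L1_hoelder (\<lambda>x. p (G x)) C \<alpha>"
    if [measurable]: "p \<in> borel_measurable borel"
      and bound: "\<And>z. \<bar>p z\<bar> \<le> cmod z" and diff: "\<And>z w. p z - p w = p (z - w)" for p
  proof
    show "periodic1 (\<lambda>x. p (G x))"
      using per by (simp add: periodic1_def)
    have "(p (G x))\<^sup>2 \<le> (cmod (G x))\<^sup>2" for x
      using power_mono[OF bound abs_ge_zero, of "G x" 2] by simp
    then show "integrable torus (\<lambda>x. (p (G x))\<^sup>2)"
      using sq by (intro Bochner_Integration.integrable_bound[OF sq]) auto
    fix \<delta> :: real assume \<delta>: "0 < \<delta>" "\<delta> \<le> 1"
    have "(\<integral>x. \<bar>p (G (x + \<delta>)) - p (G x)\<bar> \<partial>torus) \<le> (\<integral>x. cmod (G (x + \<delta>) - G x) \<partial>torus)"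
      using torus_L1_modulus_le(1)[OF _ per integrable_torus_complex[OF _ sq]]
      by (intro integral_mono') (auto simp: diff bound)
    also have "\<dots> \<le> C * \<delta> powr \<alpha>"
      by (rule modulus[OF \<delta>])
    finally show "(\<integral>x. \<bar>p (G (x + \<delta>)) - p (G x)\<bar> \<partial>torus) \<le> C * \<delta> powr \<alpha>" .
  qed (use assms in auto)
  show "L1_hoelder (\<lambda>x. Re (G x)) C \<alpha>" "L1_hoelder (\<lambda>x. Im (G x)) C \<alpha>"
    by (intro part; simp add: abs_Re_le_cmod abs_Im_le_cmod)+
qed

lemma AE_lacunary_averages_tendsto_complex:
  fixes G :: "real \<Rightarrow> complex"
  assumes [measurable]: "G \<in> borel_measurable borel" and per: "periodic1 G"
    and sq: "integrable torus (\<lambda>x. (cmod (G x))\<^sup>2)" and "1/2 < \<alpha>" "0 \<le> C"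
    and modulus: "\<And>\<delta>. 0 < \<delta> \<Longrightarrow> \<delta> \<le> 1 \<Longrightarrow> (\<integral>x. cmod (G (x + \<delta>) - G x) \<partial>torus) \<le> C * \<delta> powr \<alpha>"
    and lac: "lacunary q a"
  shows "AE \<xi> in lborel. (\<lambda>N. (\<Sum>n=1..N. G (real (a n) * \<xi>)) / of_nat N) \<longlonglongrightarrow> (\<integral>x. G x \<partial>torus)"
proof (rule AE_torus_imp_AE_lborel)
  interpret re: L1_hoelder "\<lambda>x. Re (G x)" C \<alpha>
    using L1_hoelder_Re_Im[OF assms(1-6)] by simp
  interpret im: L1_hoelder "\<lambda>x. Im (G x)" C \<alpha>
    using L1_hoelder_Re_Im[OF assms(1-6)] by simp
  have "integrable torus G"
    by (rule integrable_torus_complex[OF _ sq]) simp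
  then have integral_eq: "(\<integral>x. G x \<partial>torus) = Complex (\<integral>x. Re (G x) \<partial>torus) (\<integral>x. Im (G x) \<partial>torus)"
    by (simp add: complex_eq_iff)
  have average_eq: "(\<Sum>n=1..N. G (real (a n) * \<xi>)) / of_nat N
      = Complex ((\<Sum>n=1..N. Re (G (real (a n) * \<xi>))) / real N) ((\<Sum>n=1..N. Im (G (real (a n) * \<xi>))) / real N)"
    for N \<xi> by (simp add: complex_eq_iff Re_divide_of_nat Im_divide_of_nat)
  show "AE \<xi> in torus. (\<lambda>N. (\<Sum>n=1..N. G (real (a n) * \<xi>)) / of_nat N) \<longlonglongrightarrow> (\<integral>x. G x \<partial>torus)"
    using re.AE_lacunary_averages_tendsto[OF lac] im.AE_lacunary_averages_tendsto[OF lac]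
    unfolding integral_eq average_eq by eventually_elim (rule tendsto_Complex)
next
  fix \<xi> :: real and k :: int
  have "G (real (a n) * (\<xi> + of_int k)) = G (real (a n) * \<xi>)" for n
    using periodic1_add_of_int[OF per, of "real (a n) * \<xi>" "int (a n) * k"] by (simp add: algebra_simps)
  then show "((\<lambda>N. (\<Sum>n=1..N. G (real (a n) * (\<xi> + of_int k))) / of_nat N) \<longlonglongrightarrow> (\<integral>x. G x \<partial>torus))
      = ((\<lambda>N. (\<Sum>n=1..N. G (real (a n) * \<xi>)) / of_nat N) \<longlonglongrightarrow> (\<integral>x. G x \<partial>torus))"
    by simp
qed

lemma AE_eq_lacunary_dilates:
  assumes ae: "AE x in lborel. f x = G x" and lac: "lacunary q a"
  shows "AE \<xi> in lborel. \<forall>n\<ge>1. f (real (a n) * \<xi>) = G (real (a n) * \<xi>)"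
  unfolding AE_all_countable
proof
  fix n :: nat
  show "AE \<xi> in lborel. 1 \<le> n \<longrightarrow> f (real (a n) * \<xi>) = G (real (a n) * \<xi>)"
  proof (cases "1 \<le> n")
    case True
    then have "real (a n) \<noteq> 0"
      using lacunary_pos[OF lac] by simp
    from AE_lborel_affine[OF this ae, of 0] show ?thesis
      by (rule eventually_mono) simp
  qed simp
qed

theorem theorem3p1:
  fixes f :: "real \<Rightarrow> complex" and \<eta> :: real
  assumes "in_L2_torus f"
    and "\<eta> > 0"
    and "(\<lambda>\<delta>. L1_modulus f \<delta>) \<in> O[at_right 0](\<lambda>\<delta>. \<delta> powr (1/2 + \<eta>))"
  shows "AE \<xi> in lebesgue.
           (\<lambda>N. (\<Sum>n=1..N. f (2 ^ n * \<xi> - \<xi>)) / of_nat N)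
             \<longlonglongrightarrow> (LINT x:{0..1}|lebesgue. f x)"
proof -
  obtain G where [measurable]: "G \<in> borel_measurable borel" and G: "periodic1 G"
    "integrable torus (\<lambda>x. (cmod (G x))\<^sup>2)" and ae: "AE x in lborel. f x = G x"
    and mean: "(LINT x:{0..1}|lebesgue. f x) = (\<integral>x. G x \<partial>torus)"
    and modulus: "\<And>\<delta>. L1_modulus f \<delta> = (\<integral>x. cmod (G (x + \<delta>) - G x) \<partial>torus)"
    by (rule in_L2_torus_representative[OF assms(1)]) blast
  obtain C where "0 \<le> C" and C: "\<And>\<delta>. 0 < \<delta> \<Longrightarrow> \<delta> \<le> 1 \<Longrightarrow> L1_modulus f \<delta> \<le> C * \<delta> powr (1/2 + \<eta>)"
    using L1_modulus_powr_bound[OF assms(1) assms(3)] assms(2) by auto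
  have "AE \<xi> in lborel. (\<lambda>N. (\<Sum>n=1..N. G (real (2^n - 1) * \<xi>)) / of_nat N) \<longlonglongrightarrow> (\<integral>x. G x \<partial>torus)"
    using assms(2) \<open>0 \<le> C\<close> C[unfolded modulus]
    by (intro AE_lacunary_averages_tendsto_complex[OF _ G _ _ _ lacunary_two_power]) auto
  moreover have "AE \<xi> in lborel. \<forall>n\<ge>1. f (real (2^n - 1) * \<xi>) = G (real (2^n - 1) * \<xi>)"
    by (rule AE_eq_lacunary_dilates[OF ae lacunary_two_power])
  ultimately have "AE \<xi> in lborel. (\<lambda>N. (\<Sum>n=1..N. f (2 ^ n * \<xi> - \<xi>)) / of_nat N) \<longlonglongrightarrow> (\<integral>x. G x \<partial>torus)"
  proof eventually_elim
    case (elim \<xi>)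
    have "(\<Sum>n=1..N. f (2 ^ n * \<xi> - \<xi>)) = (\<Sum>n=1..N. G (real (2^n - 1) * \<xi>))" for N
      using elim(2) by (intro sum.cong) (auto simp: of_nat_diff left_diff_distrib)
    with elim(1) show ?case by simp
  qed
  then show ?thesis
    unfolding mean by (rule AE_completion)
qed

end
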